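(* Assume (RHS.1), (RHS.2a), (BC.1), (BC.2), and that there is $\alpha\in(0,1]$ with $f\in C^{0,\alpha}(\overline\Omega)$, $g\in C^{0,\alpha}(\partial\Omega)$, and with the viscosity solution $u$ of $-\Delta^\diamond_\infty u=f$ in $\Omega$, $u=g$ on $\partial\Omega$ satisfying $u\in C^{0,\alpha}(\overline\Omega)$. Choose the parameters so that $\varepsilon\approx h^{\alpha/(2+\alpha)}$ and $\varepsilon\theta\approx h$ (i.e., comparable up to fixed positive constants). Then, for $h$ sufficiently small, the solution $u_{\mathfrak h}$ of the discrete problem satisfies $$\|u-u_{\mathfrak h}\|_{L^\infty(\Omega_h)}\lesssim h^{\alpha^2/(2+\alpha)}.$$ In particular, if $u\in C^{0,1}(\overline\Omega)$ (i.e., $\alpha=1$), then $\|u-u_{\mathfrak h}\|_{L^\infty(\Omega_h)}\lesssim h^{1/3}$. The implied constants depend on $d$, $\Omega$, the shape regularity of the meshes, $\min_{\overline\Omega}|f|$, and the $C^{0,\alpha}$ norms of $f$, $g$, $u$.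
   Context: Setting: $\Omega\subset\mathbb R^d$ ($d\ge1$) is a bounded domain with continuous boundary. For $r>0$, $\Omega^{(r)}=\{x\in\Omega:\operatorname{dist}(x,\partial\Omega)>r\}$. $\{\mathcal T_h\}_{h>0}$ is a quasiuniform family of meshes of closed simplices, $h=\max_{T}\operatorname{diam}T$, $\Omega_h$ the interior of the union of the simplices, with $\Omega^{(h)}\subset\Omega_h\subset\Omega$; $\mathcal N_h$ is the set of vertices. $\mathbb V_h$ is the space of continuous piecewise linear functions on $\mathcal T_h$, and $\mathcal I_h$ is the Lagrange interpolant. Parameters $\mathfrak h=(h,\varepsilon,\theta)$ with $\varepsilon\in[h,\operatorname{diam}\Omega]$, $0<\theta\le1$. Interior nodes $\mathcal N_h^I=\mathcal N_h\cap\Omega^{(2\varepsilon)}$; boundary nodes $\mathcal N_h^b=\mathcal N_h\setminus\mathcal N_h^I$. $\mathbb S_\theta$ is a finite symmetric subset of the unit sphere $\mathbb S$ such that each $v\in\mathbb S$ has $v_\theta\in\mathbb S_\theta$ with $|v-v_\theta|\le\theta$. For $z\in\mathcal N_h^I$, $\mathcal N_{\mathfrak h}(z)=\{z\}\cup\{z+\varepsilon v_\theta:v_\theta\in\mathbb S_\theta\}$ and, for $w\in C(\overline\Omega)$, $-\Delta^\diamond_{\infty,\mathfrak h}w(z)=\varepsilon^{-2}\big(2w(z)-\max_{x\in\mathcal N_{\mathfrak h}(z)}\mathcal I_hw(x)-\min_{x\in\mathcal N_{\mathfrak h}(z)}\mathcal I_hw(x)\big)$. Assumptions: (RHS.1)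 $f\in C(\Omega)\cap L^\infty(\Omega)$. (RHS.2a) $\sup_\Omega f<0$ or $\inf_\Omega f>0$. (BC.1) $g\in C(\partial\Omega)$. (BC.2) for every $\varepsilon>0$ a function $\tilde g_\varepsilon\in C(\overline\Omega)$ is given such that, if $g\in C^{0,\alpha}(\partial\Omega)$ for some $\alpha\in[0,1]$, then $\tilde g_\varepsilon\in C^{0,\alpha}(\overline\Omega)$ and $\|g-\tilde g_\varepsilon\|_{L^\infty(\partial\Omega)}\le C\varepsilon^\alpha$. Discrete problem: find $u_{\mathfrak h}\in\mathbb V_h$ with $-\Delta^\diamond_{\infty,\mathfrak h}u_{\mathfrak h}(z)=f(z)$, $z\in\mathcal N_h^I$, and $u_{\mathfrak h}(z)=\tilde g_\varepsilon(z)$, $z\in\mathcal N_h^b$. Continuous problem: $\Delta^\diamond_\infty\varphi=|D\varphi|^{-2}D\varphi^\intercal D^2\varphi D\varphi$ where $D\varphi\ne0$; $\Delta^\pm_\infty\varphi(x)$ equal this if $D\varphi(x)\ne0$ and $\lambda_{\max}$, resp. $\lambda_{\min}$, of $D^2\varphi(x)$ if $D\varphi(x)=0$. The viscosity solution $u\in C(\overline\Omega)$ satisfies $u=g$ on $\partial\Omega$ and, for all $x_0\in\Omega$, $\varphi\in C^2$: $u-\varphi$ local max at $x_0$ implies $-\Delta^+_\infty\varphi(x_0)\le f(x_0)$; $u-\varphi$ local min at $x_0$ implies $-\Delta^-_\infty\varphi(x_0)\ge f(x_0)$. It exists and is unique. *)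

theory Defs
  imports "HOL-Analysis.Analysis"
begin

definition inner_set :: "'a::euclidean_space set \<Rightarrow> real \<Rightarrow> 'a set" where
  "inner_set \<Omega> r = {x \<in> \<Omega>. infdist x (frontier \<Omega>) > r}"

text \<open>Bounded domain with continuous boundary: locally, in a suitable direction \<open>e\<close>,
  \<open>\<Omega>\<close> is the strict epigraph of a continuous function on the hyperplane \<open>e\<^sup>\<perp>\<close>.\<close>
definition continuous_boundary :: "'a::euclidean_space set \<Rightarrow> bool" where
  "continuous_boundary \<Omega> \<longleftrightarrow>
     (\<forall>x0 \<in> frontier \<Omega>. \<exists>r>0. \<exists>e \<phi>. norm e = 1 \<and>
        continuous_on {y. y \<bullet> e = 0} (\<phi> :: 'a \<Rightarrow> real) \<and>
        ball x0 r \<inter> \<Omega> = {x \<in> ball x0 r. x \<bullet> e > \<phi> (x - (x \<bullet> e) *\<^sub>R e)})"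

definition bounded_domain_cont_bdry :: "'a::euclidean_space set \<Rightarrow> bool" where
  "bounded_domain_cont_bdry \<Omega> \<longleftrightarrow> open \<Omega> \<and> connected \<Omega> \<and> \<Omega> \<noteq> {} \<and> bounded \<Omega>
     \<and> continuous_boundary \<Omega>"

definition holder_const :: "real \<Rightarrow> real \<Rightarrow> 'a::metric_space set \<Rightarrow> ('a \<Rightarrow> real) \<Rightarrow> bool" where
  "holder_const \<alpha> L S w \<longleftrightarrow> (\<forall>x\<in>S. \<forall>y\<in>S. \<bar>w x - w y\<bar> \<le> L * dist x y powr \<alpha>)"

text \<open>\<open>w \<in> C^{0,\<alpha>}(S)\<close> (for \<open>\<alpha> = 0\<close> this is bounded continuous functions).\<close>
definition holder_on :: "real \<Rightarrow> 'a::metric_space set \<Rightarrow> ('a \<Rightarrow> real) \<Rightarrow> bool" where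
  "holder_on \<alpha> S w \<longleftrightarrow> continuous_on S w \<and> bounded (w ` S) \<and> (\<exists>L. holder_const \<alpha> L S w)"

definition C2_with :: "('a::euclidean_space \<Rightarrow> real) \<Rightarrow> ('a \<Rightarrow> 'a) \<Rightarrow> ('a \<Rightarrow> 'a \<Rightarrow>\<^sub>L 'a) \<Rightarrow> bool" where
  "C2_with \<phi> D H \<longleftrightarrow>
     (\<forall>x. (\<phi> has_derivative (\<lambda>v. D x \<bullet> v)) (at x)) \<and>
     (\<forall>x. (D has_derivative blinfun_apply (H x)) (at x)) \<and>
     continuous_on UNIV H"

definition eigenvalues :: "('a::euclidean_space \<Rightarrow>\<^sub>L 'a) \<Rightarrow> real set" where
  "eigenvalues A = {c. \<exists>v. v \<noteq> 0 \<and> blinfun_apply A v = c *\<^sub>R v}"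

definition lambda_max :: "('a::euclidean_space \<Rightarrow>\<^sub>L 'a) \<Rightarrow> real" where
  "lambda_max A = Max (eigenvalues A)"

definition lambda_min :: "('a::euclidean_space \<Rightarrow>\<^sub>L 'a) \<Rightarrow> real" where
  "lambda_min A = Min (eigenvalues A)"

definition inf_lap_plus :: "'a::euclidean_space \<Rightarrow> ('a \<Rightarrow>\<^sub>L 'a) \<Rightarrow> real" where
  "inf_lap_plus p A = (if p \<noteq> 0 then (p \<bullet> blinfun_apply A p) / (norm p)\<^sup>2 else lambda_max A)"

definition inf_lap_minus :: "'a::euclidean_space \<Rightarrow> ('a \<Rightarrow>\<^sub>L 'a) \<Rightarrow> real" where
  "inf_lap_minus p A = (if p \<noteq> 0 then (p \<bullet> blinfun_apply A p) / (norm p)\<^sup>2 else lambda_min A)"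

definition viscosity_solution ::
  "'a::euclidean_space set \<Rightarrow> ('a \<Rightarrow> real) \<Rightarrow> ('a \<Rightarrow> real) \<Rightarrow> ('a \<Rightarrow> real) \<Rightarrow> bool" where
  "viscosity_solution \<Omega> f g u \<longleftrightarrow>
     continuous_on (closure \<Omega>) u \<and> (\<forall>x\<in>frontier \<Omega>. u x = g x) \<and>
     (\<forall>x0\<in>\<Omega>. \<forall>\<phi> D H. C2_with \<phi> D H \<longrightarrow>
        ((\<exists>r>0. \<forall>x\<in>ball x0 r \<inter> \<Omega>. u x - \<phi> x \<le> u x0 - \<phi> x0) \<longrightarrow>
            - inf_lap_plus (D x0) (H x0) \<le> f x0) \<and>
        ((\<exists>r>0. \<forall>x\<in>ball x0 r \<inter> \<Omega>. u x - \<phi> x \<ge> u x0 - \<phi> x0) \<longrightarrow>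
            - inf_lap_minus (D x0) (H x0) \<ge> f x0))"

definition mesh :: "'a::euclidean_space set set \<Rightarrow> bool" where
  "mesh \<T> \<longleftrightarrow> finite \<T> \<and> \<T> \<noteq> {} \<and> (\<forall>T\<in>\<T>. int DIM('a) simplex T) \<and>
     (\<forall>T\<in>\<T>. \<forall>T'\<in>\<T>. (T \<inter> T') face_of T \<and> (T \<inter> T') face_of T')"

definition mesh_size :: "'a::euclidean_space set set \<Rightarrow> real" where
  "mesh_size \<T> = Max (diameter ` \<T>)"

definition quasiuniform :: "real \<Rightarrow> 'a::euclidean_space set set \<Rightarrow> bool" where
  "quasiuniform \<sigma> \<T> \<longleftrightarrow> (\<forall>T\<in>\<T>. (\<exists>x. ball x (diameter T / \<sigma>) \<subseteq> T) \<and>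
      mesh_size \<T> \<le> \<sigma> * diameter T)"

definition mesh_domain :: "'a::euclidean_space set set \<Rightarrow> 'a set" where
  "mesh_domain \<T> = interior (\<Union>\<T>)"

definition nodes :: "'a::euclidean_space set set \<Rightarrow> 'a set" where
  "nodes \<T> = {z. \<exists>T\<in>\<T>. z extreme_point_of T}"

text \<open>Continuous piecewise linear functions (values outside the mesh are irrelevant).\<close>
definition Vh :: "'a::euclidean_space set set \<Rightarrow> ('a \<Rightarrow> real) set" where
  "Vh \<T> = {w. \<forall>T\<in>\<T>. \<exists>a b. \<forall>x\<in>T. w x = a \<bullet> x + b}"

definition lagrange_interp :: "'a::euclidean_space set set \<Rightarrow> ('a \<Rightarrow> real) \<Rightarrow> 'a \<Rightarrow> real" where
  "lagrange_interp \<T> w = (THE v. v \<in> Vh \<T> \<and> (\<forall>z\<in>nodes \<T>. v z = w z) \<and>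
                                  (\<forall>x. x \<notin> \<Union>\<T> \<longrightarrow> v x = 0))"

definition direction_set :: "real \<Rightarrow> 'a::euclidean_space set \<Rightarrow> bool" where
  "direction_set \<theta> S \<longleftrightarrow> finite S \<and> S \<subseteq> sphere 0 1 \<and> (\<forall>v\<in>S. - v \<in> S) \<and>
     (\<forall>v. norm v = 1 \<longrightarrow> (\<exists>w\<in>S. norm (v - w) \<le> \<theta>))"

definition stencil :: "real \<Rightarrow> 'a::euclidean_space set \<Rightarrow> 'a \<Rightarrow> 'a set" where
  "stencil \<epsilon> S z = insert z ((\<lambda>v. z + \<epsilon> *\<^sub>R v) ` S)"

definition neg_disc_inf_lap :: "'a::euclidean_space set set \<Rightarrow> real \<Rightarrow> 'a set \<Rightarrow> ('a \<Rightarrow> real) \<Rightarrow> 'a \<Rightarrow> real" where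
  "neg_disc_inf_lap \<T> \<epsilon> S w z =
     (2 * w z - Max (lagrange_interp \<T> w ` stencil \<epsilon> S z)
              - Min (lagrange_interp \<T> w ` stencil \<epsilon> S z)) / \<epsilon>\<^sup>2"

definition interior_nodes :: "'a::euclidean_space set \<Rightarrow> 'a set set \<Rightarrow> real \<Rightarrow> 'a set" where
  "interior_nodes \<Omega> \<T> \<epsilon> = nodes \<T> \<inter> inner_set \<Omega> (2 * \<epsilon>)"

definition boundary_nodes :: "'a::euclidean_space set \<Rightarrow> 'a set set \<Rightarrow> real \<Rightarrow> 'a set" where
  "boundary_nodes \<Omega> \<T> \<epsilon> = nodes \<T> - interior_nodes \<Omega> \<T> \<epsilon>"

definition discrete_solution ::
  "'a::euclidean_space set \<Rightarrow> 'a set set \<Rightarrow> real \<Rightarrow> 'a set \<Rightarrow> ('a \<Rightarrow> real) \<Rightarrow> ('a \<Rightarrow> real)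
     \<Rightarrow> ('a \<Rightarrow> real) \<Rightarrow> bool" where
  "discrete_solution \<Omega> \<T> \<epsilon> S f g\<^sub>\<epsilon> uh \<longleftrightarrow> uh \<in> Vh \<T> \<and>
     (\<forall>z\<in>interior_nodes \<Omega> \<T> \<epsilon>. neg_disc_inf_lap \<T> \<epsilon> S uh z = f z) \<and>
     (\<forall>z\<in>boundary_nodes \<Omega> \<T> \<epsilon>. uh z = g\<^sub>\<epsilon> z)"

end

theory Submission
  imports Defs
begin

(*
  The error is bounded one side at a time, the other side being the same argument for -u, -f
  and -u_h. Comparison with cones shows that a viscosity subsolution satisfies
  2 u(q) - max u(B_2\<epsilon>(z)) - u(z) \<le> \<epsilon>\<^sup>2 sup f(B_2\<epsilon>(z)) whenever |q - z| \<le> \<epsilon>. Hence the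
  sup-convolution u\<^sup>\<epsilon>(x) = max u(B_\<epsilon>(x)) solves the scheme up to a consistency error \<eta>, made of
  the oscillation of f and of the angular and spatial discretisation errors. As f has a sign,
  \<kappa> u\<^sup>\<epsilon> with |\<kappa> - 1| \<le> 2\<eta>/min |f| is a strict discrete subsolution, so the nodal maximum of
  \<kappa> u\<^sup>\<epsilon> - u_h sits at a boundary node, where the boundary data and the Hoelder continuity of
  u control it. The resulting bound \<epsilon>\<^sup>\<alpha> + (\<epsilon>\<theta>)\<^sup>\<alpha>/\<epsilon>\<^sup>2 + h\<^sup>\<alpha>/\<epsilon>\<^sup>2 is of order h^(\<alpha>\<^sup>2/(2+\<alpha>)) for
  \<epsilon> \<approx> h^(\<alpha>/(2+\<alpha>)) and \<epsilon>\<theta> \<approx> h.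
*)

section \<open>Quadratic test functions\<close>

definition quad_test :: "'a::euclidean_space \<Rightarrow> 'a \<Rightarrow> real \<Rightarrow> real \<Rightarrow> 'a \<Rightarrow> 'a \<Rightarrow> real" where
  "quad_test x0 p a b e v = p \<bullet> (v - x0) + a * ((v - x0) \<bullet> (v - x0)) + b * (e \<bullet> (v - x0))\<^sup>2"

definition quad_hess :: "real \<Rightarrow> real \<Rightarrow> 'a::euclidean_space \<Rightarrow> 'a \<Rightarrow>\<^sub>L 'a" where
  "quad_hess a b e = Blinfun (\<lambda>w. (2*a) *\<^sub>R w + (2*b*(e \<bullet> w)) *\<^sub>R e)"

lemma quad_hess_apply: "blinfun_apply (quad_hess a b e) w = (2*a) *\<^sub>R w + (2*b*(e \<bullet> w)) *\<^sub>R e"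
proof -
  have "bounded_linear (\<lambda>w::'a. (2*a) *\<^sub>R w + (2*b*(e \<bullet> w)) *\<^sub>R e)"
    by (auto intro!: bounded_linear_intros)
  then show ?thesis
    unfolding quad_hess_def by (simp add: bounded_linear_Blinfun_apply)
qed

lemma quad_test_at_centre [simp]: "quad_test x0 p a b e x0 = 0"
  by (simp add: quad_test_def)

lemma quad_test_uminus: "quad_test x0 (-p) (-a) (-b) e v = - quad_test x0 p a b e v"
  by (simp add: quad_test_def)

lemma C2_with_quad_test:
  "C2_with (quad_test x0 p a b e) (\<lambda>v. p + (2*a) *\<^sub>R (v - x0) + (2*b*(e \<bullet> (v - x0))) *\<^sub>R e)
     (\<lambda>_. quad_hess a b e)"
  unfolding C2_with_def
proof (intro conjI allI)
  fix x :: 'a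
  show "(quad_test x0 p a b e has_derivative
          (\<lambda>v. (p + (2*a) *\<^sub>R (x - x0) + (2*b*(e \<bullet> (x - x0))) *\<^sub>R e) \<bullet> v)) (at x)"
    unfolding quad_test_def
    by (rule derivative_eq_intros refl | simp)+
       (simp add: algebra_simps inner_add_left inner_commute power2_eq_square)
  show "((\<lambda>v. p + (2*a) *\<^sub>R (v - x0) + (2*b*(e \<bullet> (v - x0))) *\<^sub>R e) has_derivative
          blinfun_apply (quad_hess a b e)) (at x)"
    unfolding quad_hess_apply by (rule derivative_eq_intros refl | simp)+
qed simp

lemma eigenvalues_quad_hess_isotropic: "eigenvalues (quad_hess a 0 e) = {2*a}"
proof -
  obtain w :: 'a where "w \<noteq> 0"
    using nonzero_Basis SOME_Basis by blast
  then show ?thesis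
    unfolding eigenvalues_def quad_hess_apply by (auto dest: scaleR_cancel_right[THEN iffD1])
qed

lemma inf_lap_plus_quad_hess_isotropic: "inf_lap_plus p (quad_hess a 0 e) = 2*a"
  by (simp add: inf_lap_plus_def lambda_max_def eigenvalues_quad_hess_isotropic quad_hess_apply
      power2_norm_eq_inner)

lemma inf_lap_plus_quad_hess_parallel:
  assumes e: "norm e = 1" and s: "s \<noteq> 0"
  shows "inf_lap_plus (s *\<^sub>R e) (quad_hess a b e) = 2*a + 2*b"
proof -
  have "e \<bullet> e = 1"
    using e by (simp add: norm_eq_1)
  then have "(s *\<^sub>R e) \<bullet> blinfun_apply (quad_hess a b e) (s *\<^sub>R e) = (2*a + 2*b) * s\<^sup>2"
    by (simp add: quad_hess_apply inner_add_right power2_eq_square algebra_simps)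
  moreover have "(norm (s *\<^sub>R e))\<^sup>2 = s\<^sup>2"
    using e by (simp add: power2_abs)
  ultimately show ?thesis
    using s e by (auto simp: inf_lap_plus_def)
qed

lemma inf_lap_minus_quad_hess_uminus:
  assumes "p \<noteq> 0 \<or> b = 0"
  shows "inf_lap_minus (-p) (quad_hess (-a) (-b) e) = - inf_lap_plus p (quad_hess a b e)"
proof (cases "p = 0")
  case True
  with assms have "b = 0"
    by blast
  with True show ?thesis
    by (simp add: inf_lap_minus_def lambda_min_def inf_lap_plus_quad_hess_isotropic
        eigenvalues_quad_hess_isotropic)
next
  case False
  then show ?thesis
    by (simp add: inf_lap_minus_def inf_lap_plus_def quad_hess_apply inner_add_right field_simps)
qed

text \<open>The restriction
  \<open>p \<noteq> 0 \<or> b = 0\<close> avoids the spectrum of an anisotropic Hessian, which would be needed to pass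
  from \<open>\<lambda>\<^sub>m\<^sub>a\<^sub>x\<close> to \<open>\<lambda>\<^sub>m\<^sub>i\<^sub>n\<close> under \<open>u \<mapsto> -u\<close>.\<close>
definition quad_subsolution :: "'a::euclidean_space set \<Rightarrow> ('a \<Rightarrow> real) \<Rightarrow> ('a \<Rightarrow> real) \<Rightarrow> bool" where
  "quad_subsolution \<Omega> u f \<longleftrightarrow> (\<forall>x0\<in>\<Omega>. \<forall>p a b e. (p \<noteq> 0 \<or> b = 0) \<longrightarrow>
     (\<exists>r>0. \<forall>x\<in>ball x0 r \<inter> \<Omega>. u x - quad_test x0 p a b e x \<le> u x0) \<longrightarrow>
     - inf_lap_plus p (quad_hess a b e) \<le> f x0)"

lemma quad_subsolutionD:
  assumes "quad_subsolution \<Omega> u f" "x0 \<in> \<Omega>" "p \<noteq> 0 \<or> b = 0" "r > 0"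
    and "\<And>x. x \<in> ball x0 r \<inter> \<Omega> \<Longrightarrow> u x - quad_test x0 p a b e x \<le> u x0"
  shows "- inf_lap_plus p (quad_hess a b e) \<le> f x0"
  using assms unfolding quad_subsolution_def by blast

lemma viscosity_solution_quad_subsolution:
  assumes "viscosity_solution \<Omega> f g u"
  shows "quad_subsolution \<Omega> u f"
  unfolding quad_subsolution_def
proof (intro ballI allI impI)
  fix x0 p a b e
  assume "x0 \<in> \<Omega>" and "\<exists>r>0. \<forall>x\<in>ball x0 r \<inter> \<Omega>. u x - quad_test x0 p a b e x \<le> u x0"
  then show "- inf_lap_plus p (quad_hess a b e) \<le> f x0"
    using assms C2_with_quad_test[of x0 p a b e] unfolding viscosity_solution_def by fastforce
qed

lemma viscosity_solution_quad_subsolution_uminus: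
  assumes "viscosity_solution \<Omega> f g u"
  shows "quad_subsolution \<Omega> (\<lambda>x. - u x) (\<lambda>x. - f x)"
  unfolding quad_subsolution_def
proof (intro ballI allI impI)
  fix x0 p a b e
  assume x0: "x0 \<in> \<Omega>" and pb: "p \<noteq> 0 \<or> b = 0"
    and "\<exists>r>0. \<forall>x\<in>ball x0 r \<inter> \<Omega>. - u x - quad_test x0 p a b e x \<le> - u x0"
  then obtain r where "r > 0"
    and r: "\<And>x. x \<in> ball x0 r \<inter> \<Omega> \<Longrightarrow> - u x - quad_test x0 p a b e x \<le> - u x0"
    by blast
  have "u x - quad_test x0 (-p) (-a) (-b) e x \<ge> u x0 - quad_test x0 (-p) (-a) (-b) e x0"
    if "x \<in> ball x0 r \<inter> \<Omega>" for x
    using r[OF that] by (simp add: quad_test_uminus)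
  with \<open>r > 0\<close> have "\<exists>r>0. \<forall>x\<in>ball x0 r \<inter> \<Omega>.
      u x - quad_test x0 (-p) (-a) (-b) e x \<ge> u x0 - quad_test x0 (-p) (-a) (-b) e x0"
    by blast
  then have "- inf_lap_minus (-p) (quad_hess (-a) (-b) e) \<ge> f x0"
    using assms x0 C2_with_quad_test[of x0 "-p" "-a" "-b" e]
    unfolding viscosity_solution_def by fastforce
  then show "- inf_lap_plus p (quad_hess a b e) \<le> - f x0"
    using inf_lap_minus_quad_hess_uminus[OF pb] by simp
qed

section \<open>Comparison with cones\<close>

lemma norm_add_le_quadratic_expansion:
  fixes e d :: "'a::real_inner"
  assumes r: "r > 0" and e: "norm e = 1" and d: "norm d < r/2"
  shows "norm (r *\<^sub>R e + d) \<le> r + e \<bullet> d + (d \<bullet> d - (e \<bullet> d)\<^sup>2)/r"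
proof -
  define t where "t = e \<bullet> d"
  define s where "s = d \<bullet> d - t\<^sup>2"
  have t: "\<bar>t\<bar> \<le> norm d"
    unfolding t_def using Cauchy_Schwarz_ineq2[of e d] e by simp
  have "t\<^sup>2 \<le> (norm d)\<^sup>2"
    using power_mono[OF t, of 2] by simp
  then have s: "s \<ge> 0"
    unfolding s_def by (simp add: power2_norm_eq_inner)
  have rt: "r + t > r/2"
    using t d by linarith
  have "(norm (r *\<^sub>R e + d))\<^sup>2 = r\<^sup>2 * (e \<bullet> e) + 2*r*t + d \<bullet> d"
    unfolding t_def power2_norm_eq_inner
    by (simp add: inner_add_left inner_add_right inner_commute power2_eq_square algebra_simps)
  also have "\<dots> = (r + t)\<^sup>2 + s"
    using e unfolding s_def by (simp add: norm_eq_1 power2_eq_square algebra_simps)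
  also have "\<dots> \<le> (r + t + s/r)\<^sup>2"
  proof -
    have "s * r \<le> s * (2*(r + t))"
      using s rt by (intro mult_left_mono) auto
    then have "s \<le> s/r * (2*(r + t))"
      using r by (simp add: field_simps)
    moreover have "(r + t + s/r)\<^sup>2 = (r + t)\<^sup>2 + s/r * (2*(r + t)) + (s/r)\<^sup>2"
      by (simp add: power2_eq_square algebra_simps)
    ultimately show ?thesis
      using zero_le_power2[of "s/r"] by linarith
  qed
  finally have "(norm (r *\<^sub>R e + d))\<^sup>2 \<le> (r + t + s/r)\<^sup>2" .
  moreover have "0 \<le> r + t + s/r"
    using s r rt by simp
  ultimately have "norm (r *\<^sub>R e + d) \<le> r + t + s/r"
    by (rule power2_le_imp_le)
  then show ?thesis
    unfolding s_def t_def .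
qed

text \<open>The cone \<open>y \<mapsto> a\<bar>y - x\<bar> - k\<bar>y - x\<bar>\<^sup>2/2\<close> is touched from above at \<open>x\<^sub>0 \<noteq> x\<close>
  by a quadratic whose \<open>\<infinity>\<close>-Laplacian is \<open>-k\<close>.\<close>
lemma cone_le_quad_test:
  fixes x x0 y :: "'a::euclidean_space"
  assumes "x0 \<noteq> x" "a \<ge> 0" "dist x0 y < dist x x0 / 2"
  defines "r \<equiv> dist x x0"
  defines "e \<equiv> (1/r) *\<^sub>R (x0 - x)"
  shows "a * dist x y - k * (dist x y)\<^sup>2/2
    \<le> a * r - k * r\<^sup>2/2 + quad_test x0 ((a - k*r) *\<^sub>R e) (a/r - k/2) (-a/r) e y"
proof -
  define d where "d = y - x0"
  have r: "r > 0"
    using assms(1) unfolding r_def by simp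
  have e: "norm e = 1"
    using r unfolding e_def r_def by (simp add: dist_norm norm_minus_commute)
  have "e \<bullet> e = 1"
    using e by (simp add: norm_eq_1)
  have yx: "y - x = r *\<^sub>R e + d"
    using r unfolding d_def e_def by (simp add: algebra_simps)
  define N where "N = dist x y"
  have N: "N = norm (r *\<^sub>R e + d)"
    unfolding N_def by (metis dist_commute dist_norm yx)
  have "N \<le> r + e \<bullet> d + (d \<bullet> d - (e \<bullet> d)\<^sup>2)/r"
    unfolding N using assms(3) r_def
    by (intro norm_add_le_quadratic_expansion e r)
      (simp add: d_def dist_norm norm_minus_commute[of y x0])
  then have "a * N \<le> a * (r + e \<bullet> d + (d \<bullet> d - (e \<bullet> d)\<^sup>2)/r)"
    using assms(2) by (rule mult_left_mono)
  moreover have "N\<^sup>2 = r\<^sup>2 + 2*r*(e \<bullet> d) + d \<bullet> d"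
    unfolding N power2_norm_eq_inner using \<open>e \<bullet> e = 1\<close>
    by (simp add: inner_add_left inner_add_right inner_commute power2_eq_square algebra_simps)
  moreover have "quad_test x0 ((a - k*r) *\<^sub>R e) (a/r - k/2) (-a/r) e y
      = (a - k*r)*(e \<bullet> d) + (a/r - k/2)*(d \<bullet> d) - (a/r)*(e \<bullet> d)\<^sup>2"
    unfolding quad_test_def d_def by simp
  ultimately show ?thesis
    unfolding N_def[symmetric] by (simp add: algebra_simps diff_divide_distrib add_divide_distrib)
qed

lemma quad_subsolution_cone_comparison:
  assumes qs: "quad_subsolution \<Omega> u f" and sub: "cball x R \<subseteq> \<Omega>"
    and cont: "continuous_on (cball x R) u"
    and a: "a \<ge> 0" and ak: "\<And>r. 0 < r \<Longrightarrow> r < R \<Longrightarrow> k*r < a"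
    and fk: "\<And>y. y \<in> ball x R \<Longrightarrow> f y < k"
    and bdry: "\<And>v. dist x v = R \<Longrightarrow> u v \<le> u x + a*R - k*R\<^sup>2/2"
    and v: "v \<in> cball x R"
  shows "u v \<le> u x + a * dist x v - k*(dist x v)\<^sup>2/2"
proof (rule ccontr)
  assume contra: "\<not> ?thesis"
  define F where "F y = u y - (u x + a * dist x y - k*(dist x y)\<^sup>2/2)" for y
  have "continuous_on (cball x R) F"
    unfolding F_def by (intro continuous_intros cont) auto
  then obtain x0 where x0: "x0 \<in> cball x R" and max: "\<And>y. y \<in> cball x R \<Longrightarrow> F y \<le> F x0"
    using continuous_attains_sup[OF compact_cball] v by blast
  have "F x0 > 0"
    using contra max[OF v] unfolding F_def by simp
  then have "x0 \<noteq> x"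
    unfolding F_def by auto
  define r where "r = dist x x0"
  have "r \<noteq> R"
    using bdry \<open>F x0 > 0\<close> unfolding F_def r_def by force
  then have r: "0 < r" "r < R"
    using x0 \<open>x0 \<noteq> x\<close> unfolding r_def by auto
  define e where "e = (1/r) *\<^sub>R (x0 - x)"
  have e: "norm e = 1"
    using r unfolding e_def r_def by (simp add: dist_norm norm_minus_commute)
  define \<rho> where "\<rho> = min (r/2) (R - r)"
  have "u y - quad_test x0 ((a - k*r) *\<^sub>R e) (a/r - k/2) (-a/r) e y \<le> u x0"
    if y: "y \<in> ball x0 \<rho> \<inter> \<Omega>" for y
  proof -
    have "dist x y \<le> dist x x0 + dist x0 y"
      by (rule dist_triangle)
    then have "F y \<le> F x0"
      using y by (intro max) (simp add: \<rho>_def r_def)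
    then show ?thesis
      using cone_le_quad_test[OF \<open>x0 \<noteq> x\<close> a, of y k] y
      unfolding F_def r_def[symmetric] e_def[symmetric] by (simp add: \<rho>_def)
  qed
  moreover have "(a - k*r) \<noteq> 0"
    using ak[OF r] by simp
  ultimately have "- inf_lap_plus ((a - k*r) *\<^sub>R e) (quad_hess (a/r - k/2) (-a/r) e) \<le> f x0"
    using r e x0 sub by (intro quad_subsolutionD[OF qs, where r = \<rho>]) (auto simp: \<rho>_def)
  then have "k \<le> f x0"
    using inf_lap_plus_quad_hess_parallel[OF e \<open>a - k*r \<noteq> 0\<close>] by simp
  moreover have "x0 \<in> ball x R"
    using r unfolding r_def by simp
  ultimately show False
    using fk by fastforce
qed

lemma continuous_attains_sup_in_ball:
  fixes F :: "'a::heine_borel \<Rightarrow> real"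
  assumes "continuous_on (cball z R) F" "R > 0" and sphere: "\<And>y. dist z y = R \<Longrightarrow> F y \<le> F z"
  obtains x where "dist z x < R" "\<And>y. y \<in> cball z R \<Longrightarrow> F y \<le> F x"
proof -
  have "cball z R \<noteq> {}"
    using assms(2) by simp
  then obtain x0 where x0: "x0 \<in> cball z R" "\<And>y. y \<in> cball z R \<Longrightarrow> F y \<le> F x0"
    using continuous_attains_sup[OF compact_cball _ assms(1)] by blast
  show ?thesis
  proof (cases "dist z x0 < R")
    case False
    then have "F x0 \<le> F z"
      using x0(1) sphere by simp
    then show ?thesis
      using that[of z] x0(2) assms(2) by fastforce
  qed (use that x0 in blast)
qed

lemma quad_subsolution_max_growth:
  assumes qs: "quad_subsolution \<Omega> u f" and sub: "cball z R \<subseteq> \<Omega>" and R: "R > 0"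
    and cont: "continuous_on (cball z R) u"
    and p: "p \<in> cball z R" "\<And>y. y \<in> cball z R \<Longrightarrow> u y \<le> u p"
    and fk: "\<And>y. y \<in> ball z R \<Longrightarrow> f y < k"
  shows "u p - u z > - k * R\<^sup>2/2"
proof -
  define c where "c = (u p - u z) / R\<^sup>2"
  have c: "c * R\<^sup>2 = u p - u z"
    unfolding c_def using R by simp
  define F where "F y = u y - c * (dist z y)\<^sup>2" for y
  have "continuous_on (cball z R) F"
    unfolding F_def by (intro continuous_intros cont)
  moreover have "F y \<le> F z" if "dist z y = R" for y
    using p(2)[of y] that c unfolding F_def by simp
  ultimately obtain x1 where x1: "dist z x1 < R" and max1: "\<And>y. y \<in> cball z R \<Longrightarrow> F y \<le> F x1"
    using continuous_attains_sup_in_ball R by blast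
  define p1 where "p1 = (2*c) *\<^sub>R (x1 - z)"
  have "u y - quad_test x1 p1 c 0 z y \<le> u x1" if y: "y \<in> ball x1 (R - dist z x1) \<inter> \<Omega>" for y
  proof -
    have "dist z y \<le> dist z x1 + dist x1 y"
      by (rule dist_triangle)
    then have "F y \<le> F x1"
      using y by (intro max1) simp
    moreover have "(dist z y)\<^sup>2 = (dist z x1)\<^sup>2 + 2 * ((x1 - z) \<bullet> (y - x1)) + (y - x1) \<bullet> (y - x1)"
      unfolding dist_norm power2_norm_eq_inner
      by (simp add: inner_diff_left inner_diff_right inner_commute algebra_simps)
    ultimately show ?thesis
      unfolding F_def quad_test_def p1_def by (simp add: algebra_simps)
  qed
  then have "- inf_lap_plus p1 (quad_hess c 0 z) \<le> f x1"
    using x1 sub by (intro quad_subsolutionD[OF qs, where r = "R - dist z x1"]) auto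
  moreover have "f x1 < k"
    using fk x1 by simp
  ultimately have "- k < 2 * c"
    by (simp add: inf_lap_plus_quad_hess_isotropic)
  then have "- k * R\<^sup>2 < 2 * c * R\<^sup>2"
    using R by (intro mult_strict_right_mono) auto
  then show ?thesis
    using c by simp
qed

lemma cone_radius_exists:
  fixes G k \<epsilon> :: real
  assumes \<epsilon>: "\<epsilon> > 0" and G: "G \<ge> 0" "G > - 2*k*\<epsilon>\<^sup>2"
  defines "a \<equiv> G/(2*\<epsilon>) + k*\<epsilon>"
  obtains R where "\<epsilon> \<le> R" "R \<le> 2*\<epsilon>" "\<And>r. 0 < r \<Longrightarrow> r < R \<Longrightarrow> k*r < a" "G \<le> a*R - k*R\<^sup>2/2"
proof (cases "a \<ge> 2*k*\<epsilon>")
  case True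
  have a2: "a * (2*\<epsilon>) = G + 2*k*\<epsilon>\<^sup>2"
    unfolding a_def using \<epsilon> by (simp add: field_simps power2_eq_square)
  then have "0 < a * (2*\<epsilon>)"
    using G by simp
  then have "a > 0"
    using \<epsilon> by (simp add: zero_less_mult_iff)
  have "k*r < a" if r: "0 < r" "r < 2*\<epsilon>" for r
  proof (cases "k \<le> 0")
    case True
    then show ?thesis
      using r \<open>a > 0\<close> by (smt (verit) mult_nonpos_nonneg)
  next
    case False
    then have "k*r < k*(2*\<epsilon>)"
      using r by simp
    then show ?thesis
      using \<open>a \<ge> 2*k*\<epsilon>\<close> by simp
  qed
  moreover have "G \<le> a*(2*\<epsilon>) - k*(2*\<epsilon>)\<^sup>2/2"
    unfolding a2 by (simp add: power2_eq_square)
  ultimately show ?thesis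
    using \<epsilon> that[of "2*\<epsilon>"] by simp
next
  case False
  have "a \<ge> k*\<epsilon>"
    unfolding a_def using G \<epsilon> by simp
  with False have "k*\<epsilon> > 0"
    by simp
  then have k: "k > 0"
    using \<epsilon> by (simp add: zero_less_mult_iff)
  have "a\<^sup>2 - 2*k*G = (G/(2*\<epsilon>) - k*\<epsilon>)\<^sup>2"
    unfolding a_def using \<epsilon> by (simp add: power2_eq_square field_simps)
  then have "2*k*G \<le> a\<^sup>2"
    using zero_le_power2[of "G/(2*\<epsilon>) - k*\<epsilon>"] by linarith
  moreover have "a*(a/k) - k*(a/k)\<^sup>2/2 = a\<^sup>2/(2*k)"
    using k by (simp add: power2_eq_square field_simps)
  ultimately have "G \<le> a*(a/k) - k*(a/k)\<^sup>2/2"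
    using k by (simp add: pos_le_divide_eq mult.commute)
  moreover have "k*r < a" if "r < a/k" for r
    using that k by (simp add: pos_less_divide_eq mult.commute)
  moreover have "\<epsilon> \<le> a/k" "a/k \<le> 2*\<epsilon>"
    using k \<open>a \<ge> k*\<epsilon>\<close> False by (simp_all add: pos_le_divide_eq pos_divide_le_eq algebra_simps)
  ultimately show ?thesis
    using that[of "a/k"] by blast
qed

lemma cone_profile_le:
  fixes a k t \<epsilon> :: real
  assumes "0 \<le> t" "t \<le> \<epsilon>" "k*\<epsilon> \<le> a" "0 < a"
  shows "a*t - k*t\<^sup>2/2 \<le> a*\<epsilon> - k*\<epsilon>\<^sup>2/2"
proof -
  have "k*(\<epsilon> + t) \<le> 2*a"
  proof (cases "k \<le> 0")
    case True
    then have "k*(\<epsilon> + t) \<le> 0"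
      using assms by (simp add: mult_nonpos_nonneg)
    then show ?thesis
      using assms by simp
  next
    case False
    then have "k*(\<epsilon> + t) \<le> k*(2*\<epsilon>)"
      using assms by (intro mult_left_mono) auto
    then show ?thesis
      using assms by simp
  qed
  then have "0 \<le> (\<epsilon> - t) * (a - k*(\<epsilon> + t)/2)"
    using assms by simp
  moreover have "a*\<epsilon> - k*\<epsilon>\<^sup>2/2 - (a*t - k*t\<^sup>2/2) = (\<epsilon> - t) * (a - k*(\<epsilon> + t)/2)"
    by (simp add: power2_eq_square field_simps)
  ultimately show ?thesis
    by linarith
qed

text \<open>This is the source of the consistency of the scheme. The proof compares \<open>u\<close> with a cone
  through \<open>(z, u z)\<close> whose slope is tuned so that the cone lies above \<open>u\<close> on a sphere of radius
  between \<open>\<epsilon>\<close> and \<open>2\<epsilon>\<close>.\<close>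
lemma quad_subsolution_second_difference:
  assumes qs: "quad_subsolution \<Omega> u f" and sub: "cball z (2*\<epsilon>) \<subseteq> \<Omega>" and \<epsilon>: "\<epsilon> > 0"
    and cont: "continuous_on (cball z (2*\<epsilon>)) u"
    and p: "p \<in> cball z (2*\<epsilon>)" "\<And>y. y \<in> cball z (2*\<epsilon>) \<Longrightarrow> u y \<le> u p"
    and fk: "\<And>y. y \<in> ball z (2*\<epsilon>) \<Longrightarrow> f y < k"
    and q: "q \<in> cball z \<epsilon>"
  shows "2 * u q - u p - u z \<le> k * \<epsilon>\<^sup>2"
proof -
  define G where "G = u p - u z"
  have "G \<ge> 0"
    unfolding G_def using p(2)[of z] \<epsilon> by simp
  have "G > - 2*k*\<epsilon>\<^sup>2"
    using quad_subsolution_max_growth[OF qs sub _ cont p fk] \<epsilon>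
    unfolding G_def by (simp add: power2_eq_square algebra_simps)
  define a where "a = G/(2*\<epsilon>) + k*\<epsilon>"
  have a: "a * (2*\<epsilon>) = G + 2*k*\<epsilon>\<^sup>2"
    unfolding a_def using \<epsilon> by (simp add: field_simps power2_eq_square)
  then have "0 < a * (2*\<epsilon>)"
    using \<open>G > _\<close> by simp
  then have "a > 0"
    using \<epsilon> by (simp add: zero_less_mult_iff)
  have "k*\<epsilon> \<le> a"
    unfolding a_def using \<open>G \<ge> 0\<close> \<epsilon> by simp
  obtain R where R: "\<epsilon> \<le> R" "R \<le> 2*\<epsilon>" "\<And>r. 0 < r \<Longrightarrow> r < R \<Longrightarrow> k*r < a" "G \<le> a*R - k*R\<^sup>2/2"
    using cone_radius_exists[OF \<epsilon> \<open>G \<ge> 0\<close> \<open>G > _\<close>] unfolding a_def by blast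
  have "cball z R \<subseteq> cball z (2*\<epsilon>)"
    using R(2) by auto
  moreover have "u v \<le> u z + a*R - k*R\<^sup>2/2" if "dist z v = R" for v
    using p(2)[of v] that R(2,4) unfolding G_def by simp
  ultimately have "u q \<le> u z + a * dist z q - k*(dist z q)\<^sup>2/2"
    using q R(1,2) sub fk \<open>a > 0\<close>
    by (intro quad_subsolution_cone_comparison[where x = z and R = R, OF qs _
          continuous_on_subset[OF cont] _ R(3)]) auto
  also have "\<dots> \<le> u z + a*\<epsilon> - k*\<epsilon>\<^sup>2/2"
    using cone_profile_le[of "dist z q" \<epsilon> k a] q \<open>k*\<epsilon> \<le> a\<close> \<open>a > 0\<close> by simp
  finally show ?thesis
    using a unfolding G_def by (simp add: power2_eq_square algebra_simps)
qed

section \<open>Hoelder continuity\<close>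

lemma holder_const_bound:
  assumes "holder_const \<alpha> L S w" "L \<ge> 0" "\<alpha> \<ge> 0" "x \<in> S" "y \<in> S" "dist x y \<le> D"
  shows "\<bar>w x - w y\<bar> \<le> L * D powr \<alpha>"
proof -
  have "\<bar>w x - w y\<bar> \<le> L * dist x y powr \<alpha>"
    using assms unfolding holder_const_def by blast
  also have "\<dots> \<le> L * D powr \<alpha>"
    using assms by (intro mult_left_mono powr_mono2) auto
  finally show ?thesis .
qed

lemma holder_const_uminus: "holder_const \<alpha> L S w \<Longrightarrow> holder_const \<alpha> L S (\<lambda>x. - w x)"
  unfolding holder_const_def by (simp only: minus_diff_minus abs_minus_cancel)

lemma holder_const_abs:
  assumes "holder_const \<alpha> L S w"
  shows "holder_const \<alpha> \<bar>L\<bar> S w"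
proof -
  have "L * d \<le> \<bar>L\<bar> * d" if "d \<ge> 0" for d :: real
    using that by (intro mult_right_mono) auto
  then show ?thesis
    using assms unfolding holder_const_def by (meson order_trans powr_ge_zero)
qed

lemma holder_on_nonneg_const:
  assumes "holder_on \<alpha> S w"
  obtains L where "L \<ge> 0" "holder_const \<alpha> L S w"
  using assms holder_const_abs abs_ge_zero unfolding holder_on_def by blast

lemma holder_on_abs_bound:
  assumes "holder_on \<alpha> S w"
  obtains M where "M \<ge> 0" "\<And>x. x \<in> S \<Longrightarrow> \<bar>w x\<bar> \<le> M"
proof -
  obtain B where "\<forall>x\<in>S. norm (w x) \<le> B"
    using assms unfolding holder_on_def bounded_iff by blast
  then show ?thesis
    using that[of "\<bar>B\<bar>"] by (simp add: order_trans[OF _ abs_ge_self])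
qed

section \<open>Meshes and the discrete scheme\<close>

lemma mesh_simplex:
  assumes "mesh \<T>" "T \<in> \<T>"
  obtains C :: "'a::euclidean_space set"
  where "finite C" "\<not> affine_dependent C" "card C = DIM('a) + 1" "T = convex hull C"
proof -
  have "int DIM('a) simplex T"
    using assms unfolding mesh_def by blast
  then show ?thesis
    using that unfolding simplex by (metis aff_independent_finite of_nat_1 of_nat_add of_nat_eq_iff)
qed

lemma vertices_subset_nodes:
  assumes "T \<in> \<T>" "\<not> affine_dependent C" "T = convex hull C"
  shows "C \<subseteq> nodes \<T>"
  using assms extreme_point_of_convex_hull_affine_independent unfolding nodes_def by blast

lemma nodes_subset_Union: "nodes \<T> \<subseteq> \<Union>\<T>"
  unfolding nodes_def extreme_point_of_def by blast

lemma finite_nodes: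
  assumes "mesh (\<T> :: 'a::euclidean_space set set)"
  shows "finite (nodes \<T>)"
proof -
  have "finite {z. z extreme_point_of T}" if T: "T \<in> \<T>" for T
  proof -
    obtain C :: "'a set" where "finite C" "T = convex hull C"
      using mesh_simplex[OF assms T] by metis
    then have "{z. z extreme_point_of T} \<subseteq> C"
      using extreme_point_of_convex_hull by blast
    then show ?thesis
      using \<open>finite C\<close> finite_subset by blast
  qed
  moreover have "finite \<T>"
    using assms unfolding mesh_def by blast
  moreover have "nodes \<T> = (\<Union>T\<in>\<T>. {z. z extreme_point_of T})"
    unfolding nodes_def by blast
  ultimately show ?thesis
    by simp
qed

lemma dist_le_mesh_size:
  assumes "mesh \<T>" "T \<in> \<T>" "x \<in> T" "y \<in> T"
  shows "dist x y \<le> mesh_size \<T>"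
proof -
  obtain C where "finite C" "T = convex hull C"
    using mesh_simplex[OF assms(1,2)] by metis
  then have "bounded T"
    by (simp add: compact_imp_bounded finite_imp_compact_convex_hull)
  then have "dist x y \<le> diameter T"
    using assms(3,4) by (rule diameter_bounded_bound)
  also have "\<dots> \<le> mesh_size \<T>"
    using assms(1,2) unfolding mesh_size_def mesh_def by (intro Max_ge) auto
  finally show ?thesis .
qed

lemma mesh_size_pos:
  assumes "mesh (\<T> :: 'a::euclidean_space set set)"
  shows "mesh_size \<T> > 0"
proof -
  obtain T where T: "T \<in> \<T>"
    using assms unfolding mesh_def by blast
  obtain C :: "'a set" where C: "finite C" "card C = DIM('a) + 1" "T = convex hull C"
    using mesh_simplex[OF assms T] by metis
  then have "\<not> card C \<le> Suc 0"
    using DIM_positive[where 'a='a] by linarith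
  then obtain a b where "a \<in> C" "b \<in> C" "a \<noteq> b"
    using card_le_Suc0_iff_eq[OF C(1)] by blast
  moreover have "C \<subseteq> T"
    unfolding C(3) by (rule hull_subset)
  ultimately show ?thesis
    using dist_le_mesh_size[OF assms T] by (metis dist_pos_lt order_less_le_trans subsetD)
qed

text \<open>Each element is a full-dimensional simplex, hence the closure of its interior.\<close>
lemma Union_mesh_subset_closure:
  assumes mesh: "mesh \<T>" and dom: "mesh_domain \<T> \<subseteq> \<Omega>"
  shows "\<Union>\<T> \<subseteq> closure \<Omega>"
proof
  fix x
  assume "x \<in> \<Union>\<T>"
  then obtain T where T: "T \<in> \<T>" "x \<in> T"
    by blast
  have "int DIM('a) simplex T"
    using mesh T(1) unfolding mesh_def by blast
  then have "rel_interior T = interior T"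
    by (intro interior_rel_interior aff_dim_simplex)
  moreover obtain C where "T = convex hull C"
    using mesh_simplex[OF mesh T(1)] by metis
  ultimately have "closure (interior T) = closure T"
    using convex_closure_rel_interior[OF convex_convex_hull] by metis
  then have "x \<in> closure (interior T)"
    using T(2) closure_subset by blast
  moreover have "interior T \<subseteq> \<Omega>"
    using dom T(1) interior_mono[of T "\<Union>\<T>"] unfolding mesh_domain_def by blast
  ultimately show "x \<in> closure \<Omega>"
    using closure_mono by blast
qed

lemma affine_fun_convex_comb:
  fixes a :: "'a::real_inner"
  assumes "finite C" "sum \<mu> C = 1" "(\<Sum>c\<in>C. \<mu> c *\<^sub>R c) = x"
  shows "a \<bullet> x + b = (\<Sum>c\<in>C. \<mu> c * (a \<bullet> c + b))"
proof -
  have "(\<Sum>c\<in>C. \<mu> c * (a \<bullet> c + b)) = a \<bullet> (\<Sum>c\<in>C. \<mu> c *\<^sub>R c) + (\<Sum>c\<in>C. \<mu> c) * b"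
    by (simp add: algebra_simps sum.distrib inner_sum_right sum_distrib_left)
  then show ?thesis
    using assms by simp
qed

lemma mesh_nodal_convex_comb:
  assumes mesh: "mesh \<T>" and x: "x \<in> \<Union>\<T>"
  obtains C \<mu> where "finite C" "C \<subseteq> nodes \<T>"
    "\<And>c. c \<in> C \<Longrightarrow> 0 \<le> \<mu> c \<and> dist x c \<le> mesh_size \<T>" "sum \<mu> C = 1"
    "\<And>w. w \<in> Vh \<T> \<Longrightarrow> w x = (\<Sum>c\<in>C. \<mu> c * w c)"
proof -
  obtain T where T: "T \<in> \<T>" "x \<in> T"
    using x by blast
  obtain C where C: "finite C" "\<not> affine_dependent C" "T = convex hull C"
    using mesh_simplex[OF mesh T(1)] by metis
  have CT: "C \<subseteq> T"
    unfolding C(3) by (rule hull_subset)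
  obtain \<mu> where \<mu>: "\<forall>c\<in>C. 0 \<le> \<mu> c" "sum \<mu> C = 1" "(\<Sum>c\<in>C. \<mu> c *\<^sub>R c) = x"
    using T(2) unfolding C(3) convex_hull_finite[OF C(1)] by blast
  have "w x = (\<Sum>c\<in>C. \<mu> c * w c)" if w: "w \<in> Vh \<T>" for w
  proof -
    obtain a b where ab: "\<forall>y\<in>T. w y = a \<bullet> y + b"
      using w T(1) unfolding Vh_def by blast
    then have "w x = (\<Sum>c\<in>C. \<mu> c * (a \<bullet> c + b))"
      using affine_fun_convex_comb[OF C(1) \<mu>(2,3)] T(2) by simp
    also have "\<dots> = (\<Sum>c\<in>C. \<mu> c * w c)"
      using ab CT by (intro sum.cong) auto
    finally show ?thesis .
  qed
  moreover have "0 \<le> \<mu> c \<and> dist x c \<le> mesh_size \<T>" if "c \<in> C" for c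
    using \<mu>(1) that CT dist_le_mesh_size[OF mesh T(1,2)] by blast
  ultimately show ?thesis
    using that C(1) vertices_subset_nodes[OF T(1) C(2,3)] \<mu>(2) by blast
qed

lemma Vh_ge_nodal_bound:
  assumes "mesh \<T>" "w \<in> Vh \<T>" "x \<in> \<Union>\<T>"
    and "\<And>z. z \<in> nodes \<T> \<Longrightarrow> dist x z \<le> mesh_size \<T> \<Longrightarrow> c \<le> w z"
  shows "c \<le> w x"
proof -
  obtain C \<mu> where C: "finite C" "C \<subseteq> nodes \<T>"
    "\<And>z. z \<in> C \<Longrightarrow> 0 \<le> \<mu> z \<and> dist x z \<le> mesh_size \<T>"
    "sum \<mu> C = 1" "w x = (\<Sum>z\<in>C. \<mu> z * w z)"
    using mesh_nodal_convex_comb[OF assms(1,3)] assms(2) by metis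
  have "c = (\<Sum>z\<in>C. \<mu> z * c)"
    using C(4) by (simp flip: sum_distrib_right)
  also have "\<dots> \<le> (\<Sum>z\<in>C. \<mu> z * w z)"
    using C(2,3) assms(4) by (intro sum_mono mult_left_mono) auto
  finally show ?thesis
    using C(5) by simp
qed

lemma lagrange_interp_Vh:
  assumes mesh: "mesh \<T>" and w: "w \<in> Vh \<T>" and x: "x \<in> \<Union>\<T>"
  shows "lagrange_interp \<T> w x = w x"
proof -
  define w0 where "w0 y = (if y \<in> \<Union>\<T> then w y else 0)" for y
  let ?P = "\<lambda>v. v \<in> Vh \<T> \<and> (\<forall>z\<in>nodes \<T>. v z = w z) \<and> (\<forall>y. y \<notin> \<Union>\<T> \<longrightarrow> v y = 0)"
  have "w0 \<in> Vh \<T>"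
    unfolding Vh_def
  proof (intro CollectI ballI)
    fix T
    assume "T \<in> \<T>"
    then obtain a b where "\<forall>x\<in>T. w x = a \<bullet> x + b"
      using w unfolding Vh_def by blast
    with \<open>T \<in> \<T>\<close> show "\<exists>a b. \<forall>x\<in>T. w0 x = a \<bullet> x + b"
      unfolding w0_def by auto
  qed
  then have "?P w0"
    using nodes_subset_Union unfolding w0_def by auto
  moreover have "v = w0" if "?P v" for v
  proof
    fix y
    show "v y = w0 y"
    proof (cases "y \<in> \<Union>\<T>")
      case True
      obtain C \<mu> where C: "C \<subseteq> nodes \<T>" "\<And>w. w \<in> Vh \<T> \<Longrightarrow> w y = (\<Sum>c\<in>C. \<mu> c * w c)"
        using mesh_nodal_convex_comb[OF mesh True] by metis
      have "v y = (\<Sum>c\<in>C. \<mu> c * v c)"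
        using C(2) that by blast
      also have "\<dots> = (\<Sum>c\<in>C. \<mu> c * w c)"
        using C(1) that by (intro sum.cong) auto
      also have "\<dots> = w y"
        using C(2) w by simp
      finally show ?thesis
        using True unfolding w0_def by simp
    qed (use that w0_def in simp)
  qed
  ultimately have "lagrange_interp \<T> w = w0"
    unfolding lagrange_interp_def by (rule the_equality)
  then show ?thesis
    using x unfolding w0_def by simp
qed

lemma Vh_uminus:
  assumes "w \<in> Vh \<T>"
  shows "(\<lambda>x. - w x) \<in> Vh \<T>"
  unfolding Vh_def
proof (intro CollectI ballI)
  fix T
  assume "T \<in> \<T>"
  then obtain a b where "\<forall>x\<in>T. w x = a \<bullet> x + b"
    using assms unfolding Vh_def by blast
  then show "\<exists>a b. \<forall>x\<in>T. - w x = a \<bullet> x + b"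
    by (intro exI[of _ "- a"] exI[of _ "- b"]) simp
qed

lemma cball_subset_if_infdist_frontier:
  fixes \<Omega> :: "'a::euclidean_space set"
  assumes "z \<in> \<Omega>" "infdist z (frontier \<Omega>) > r"
  shows "cball z r \<subseteq> \<Omega>"
proof
  fix y
  assume y: "y \<in> cball z r"
  show "y \<in> \<Omega>"
  proof (rule ccontr)
    assume "y \<notin> \<Omega>"
    have "z \<in> cball z r"
      using y zero_le_dist[of z y] by (simp del: zero_le_dist)
    then have "cball z r \<inter> \<Omega> \<noteq> {}" "cball z r - \<Omega> \<noteq> {}"
      using y \<open>y \<notin> \<Omega>\<close> assms(1) by blast+
    then have "cball z r \<inter> frontier \<Omega> \<noteq> {}"
      by (intro connected_Int_frontier convex_connected convex_cball)
    then obtain q where "q \<in> cball z r" "q \<in> frontier \<Omega>"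
      by blast
    then show False
      using infdist_le[of q "frontier \<Omega>" z] assms(2) by simp
  qed
qed

lemma frontier_near_outside_inner_set:
  fixes \<Omega> :: "'a::euclidean_space set"
  assumes "open \<Omega>" "frontier \<Omega> \<noteq> {}" "z \<in> closure \<Omega>" "z \<notin> inner_set \<Omega> r" "r \<ge> 0"
  obtains y where "y \<in> frontier \<Omega>" "dist z y \<le> r"
proof (cases "z \<in> \<Omega>")
  case False
  then have "z \<in> frontier \<Omega>"
    using assms(1,3) unfolding frontier_def by (simp add: interior_open)
  then show ?thesis
    using that assms(5) by simp
next
  case True
  obtain y where "y \<in> frontier \<Omega>" "infdist z (frontier \<Omega>) = dist z y"
    using infdist_attains_inf[OF frontier_closed assms(2)] by blast
  then show ?thesis
    using that True assms(4) unfolding inner_set_def by force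
qed

lemma frontier_nonempty_if_domain:
  assumes "bounded_domain_cont_bdry (\<Omega> :: 'a::euclidean_space set)"
  shows "frontier \<Omega> \<noteq> {}"
  using assms not_bounded_UNIV frontier_eq_empty unfolding bounded_domain_cont_bdry_def by metis

lemma direction_set_approx:
  assumes S: "direction_set \<theta> S" and "p \<noteq> z"
  obtains w where "w \<in> S" "norm w = 1" "dist p (z + dist z p *\<^sub>R w) \<le> dist z p * \<theta>"
proof -
  define v where "v = (1 / dist z p) *\<^sub>R (p - z)"
  have "norm v = 1"
    unfolding v_def using assms(2) by (simp add: dist_norm norm_minus_commute)
  then obtain w where w: "w \<in> S" "norm (v - w) \<le> \<theta>"
    using S unfolding direction_set_def by blast
  moreover have "norm w = 1"
    using w(1) S unfolding direction_set_def by auto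
  moreover have "p - z = dist z p *\<^sub>R v"
    unfolding v_def using assms(2) by simp
  then have "p - (z + dist z p *\<^sub>R w) = dist z p *\<^sub>R (v - w)"
    by (simp add: algebra_simps)
  then have "dist p (z + dist z p *\<^sub>R w) = dist z p * norm (v - w)"
    by (simp add: dist_norm)
  ultimately show ?thesis
    using that by (simp add: mult_left_mono)
qed

lemma finite_stencil: "direction_set \<theta> S \<Longrightarrow> finite (stencil \<epsilon> S z)"
  unfolding stencil_def direction_set_def by simp

lemma stencil_cball_subset:
  assumes sub: "cball z (2*\<epsilon>) \<subseteq> \<Omega>" and S: "direction_set \<theta> S" and \<epsilon>: "\<epsilon> > 0"
    and x: "x \<in> stencil \<epsilon> S z"
  shows "cball x \<epsilon> \<subseteq> \<Omega>" "dist z x \<le> \<epsilon>"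
proof -
  show "dist z x \<le> \<epsilon>"
    using x S \<epsilon> unfolding stencil_def direction_set_def by (auto simp: dist_norm)
  have "cball x \<epsilon> \<subseteq> cball z (2*\<epsilon>)"
  proof
    fix y
    assume "y \<in> cball x \<epsilon>"
    then show "y \<in> cball z (2*\<epsilon>)"
      using \<open>dist z x \<le> \<epsilon>\<close> dist_triangle[of z y x] by simp
  qed
  then show "cball x \<epsilon> \<subseteq> \<Omega>"
    using sub by blast
qed

lemma interior_node_cball:
  assumes "z \<in> interior_nodes \<Omega> \<T> \<epsilon>"
  shows "cball z (2*\<epsilon>) \<subseteq> \<Omega>"
  using assms cball_subset_if_infdist_frontier unfolding interior_nodes_def inner_set_def by blast

lemma interior_node_stencil:
  assumes z: "z \<in> interior_nodes \<Omega> \<T> \<epsilon>" and \<epsilon>: "\<epsilon> > 0" "mesh_size \<T> \<le> \<epsilon>"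
    and inner: "inner_set \<Omega> (mesh_size \<T>) \<subseteq> mesh_domain \<T>" and S: "direction_set \<theta> S"
  shows "stencil \<epsilon> S z \<subseteq> \<Union>\<T>"
proof
  fix x
  assume "x \<in> stencil \<epsilon> S z"
  then consider "x = z" | v where "v \<in> S" "x = z + \<epsilon> *\<^sub>R v"
    unfolding stencil_def by blast
  then show "x \<in> \<Union>\<T>"
  proof cases
    case 1
    then show ?thesis
      using z nodes_subset_Union unfolding interior_nodes_def by blast
  next
    case 2
    then have "norm v = 1"
      using S unfolding direction_set_def by auto
    then have "dist z x = \<epsilon>"
      using 2 \<epsilon> by (simp add: dist_norm)
    then have "x \<in> \<Omega>"
      using interior_node_cball[OF z] \<epsilon> by auto
    moreover have "infdist z (frontier \<Omega>) \<le> infdist x (frontier \<Omega>) + dist z x"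
      by (rule infdist_triangle)
    ultimately have "x \<in> inner_set \<Omega> (mesh_size \<T>)"
      using z \<open>dist z x = \<epsilon>\<close> \<epsilon> unfolding interior_nodes_def inner_set_def by auto
    then show ?thesis
      using inner interior_subset unfolding mesh_domain_def by blast
  qed
qed

lemma discrete_solution_scheme:
  assumes uh: "discrete_solution \<Omega> \<T> \<epsilon> S f g\<epsilon> uh" and mesh: "mesh \<T>"
    and \<epsilon>: "\<epsilon> > 0" "mesh_size \<T> \<le> \<epsilon>" and inner: "inner_set \<Omega> (mesh_size \<T>) \<subseteq> mesh_domain \<T>"
    and S: "direction_set \<theta> S" and z: "z \<in> interior_nodes \<Omega> \<T> \<epsilon>"
  shows "2 * uh z - Max (uh ` stencil \<epsilon> S z) - Min (uh ` stencil \<epsilon> S z) = \<epsilon>\<^sup>2 * f z"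
proof -
  have "uh \<in> Vh \<T>"
    using uh unfolding discrete_solution_def by blast
  then have "lagrange_interp \<T> uh ` stencil \<epsilon> S z = uh ` stencil \<epsilon> S z"
    using lagrange_interp_Vh[OF mesh] interior_node_stencil[OF z \<epsilon> inner S]
    by (intro image_cong) blast+
  then show ?thesis
    using uh z \<epsilon> unfolding discrete_solution_def neg_disc_inf_lap_def by (simp add: field_simps)
qed

section \<open>The sup-convolution\<close>

locale sup_convolution =
  fixes \<Omega> :: "'a::euclidean_space set" and u :: "'a \<Rightarrow> real" and \<alpha> L M \<epsilon> :: real
  assumes u_cont: "continuous_on (closure \<Omega>) u"
    and u_holder: "holder_const \<alpha> L (closure \<Omega>) u" and L: "L \<ge> 0" and \<alpha>: "\<alpha> \<ge> 0"
    and u_bounded: "\<And>x. x \<in> closure \<Omega> \<Longrightarrow> \<bar>u x\<bar> \<le> M"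
    and \<epsilon>: "\<epsilon> > 0"
begin

definition u_sup :: "'a \<Rightarrow> real" where
  "u_sup x = Sup (u ` (cball x \<epsilon> \<inter> closure \<Omega>))"

lemma u_sup_attained:
  assumes "x \<in> closure \<Omega>"
  obtains p where "p \<in> cball x \<epsilon> \<inter> closure \<Omega>" "u_sup x = u p"
proof -
  have "compact (cball x \<epsilon> \<inter> closure \<Omega>)"
    by (simp add: compact_Int_closed)
  moreover have "x \<in> cball x \<epsilon> \<inter> closure \<Omega>"
    using assms \<epsilon> by simp
  then have "cball x \<epsilon> \<inter> closure \<Omega> \<noteq> {}"
    by blast
  moreover have "continuous_on (cball x \<epsilon> \<inter> closure \<Omega>) u"
    using u_cont by (rule continuous_on_subset) simp
  ultimately obtain p where "p \<in> cball x \<epsilon> \<inter> closure \<Omega>"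
    and "\<forall>q \<in> cball x \<epsilon> \<inter> closure \<Omega>. u q \<le> u p"
    using continuous_attains_sup by blast
  moreover from this have "u_sup x = u p"
    unfolding u_sup_def by (intro cSup_eq_maximum) auto
  ultimately show ?thesis
    using that by blast
qed

lemma u_le_u_sup_at:
  assumes "x \<in> closure \<Omega>" "q \<in> cball x \<epsilon>" "q \<in> closure \<Omega>"
  shows "u q \<le> u_sup x"
proof -
  have "bdd_above (u ` (cball x \<epsilon> \<inter> closure \<Omega>))"
    by (intro bounded_imp_bdd_above compact_imp_bounded compact_continuous_image
        continuous_on_subset[OF u_cont]) (auto simp: compact_Int_closed)
  then show ?thesis
    unfolding u_sup_def using assms by (intro cSup_upper) auto
qed

lemma u_le_u_sup: "x \<in> closure \<Omega> \<Longrightarrow> u x \<le> u_sup x"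
  using u_le_u_sup_at \<epsilon> by simp

lemma u_sup_le:
  assumes "x \<in> closure \<Omega>"
  shows "u_sup x \<le> u x + L * \<epsilon> powr \<alpha>"
proof -
  obtain p where "p \<in> cball x \<epsilon> \<inter> closure \<Omega>" "u_sup x = u p"
    using u_sup_attained[OF assms] .
  moreover from this have "\<bar>u p - u x\<bar> \<le> L * \<epsilon> powr \<alpha>"
    using assms by (intro holder_const_bound[OF u_holder L \<alpha>]) (auto simp: dist_commute)
  ultimately show ?thesis
    by simp
qed

lemma abs_u_sup_le: "x \<in> closure \<Omega> \<Longrightarrow> \<bar>u_sup x\<bar> \<le> M"
  by (metis Int_iff u_bounded u_sup_attained)

text \<open>A maximiser \<open>p\<close> for \<open>x\<close> is moved to \<open>z + s (p - x)\<close> with \<open>s = (\<epsilon> - h)/\<epsilon>\<close>, which is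
  admissible for \<open>z\<close> and at distance at most \<open>2h\<close> from \<open>p\<close>.\<close>
lemma u_sup_shift:
  assumes x: "cball x \<epsilon> \<subseteq> \<Omega>" and z: "z \<in> closure \<Omega>" and h: "0 \<le> h" "h \<le> \<epsilon>"
    and d: "dist x z \<le> h"
  shows "u_sup x \<le> u_sup z + L * (2*h) powr \<alpha>"
proof -
  obtain p where p: "p \<in> cball x \<epsilon> \<inter> closure \<Omega>" "u_sup x = u p"
    using u_sup_attained x \<epsilon> closure_subset by (metis centre_in_cball less_imp_le subsetD)
  define s where "s = (\<epsilon> - h)/\<epsilon>"
  have s: "0 \<le> s" "s \<le> 1" "(1 - s) * \<epsilon> = h"
    unfolding s_def using h \<epsilon> by (auto simp: field_simps)
  define p' where "p' = z + s *\<^sub>R (p - x)"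
  have px: "norm (p - x) \<le> \<epsilon>" and zx: "norm (z - x) \<le> h"
    using p d by (auto simp: dist_norm norm_minus_commute)
  have "dist x p' = norm ((z - x) + s *\<^sub>R (p - x))"
    unfolding p'_def dist_norm by (simp add: algebra_simps norm_minus_commute)
  also have "\<dots> \<le> norm (z - x) + s * norm (p - x)"
    using s by (simp add: norm_triangle_ineq[THEN order_trans])
  also have "\<dots> \<le> h + s * \<epsilon>"
    using px zx s by (intro add_mono mult_left_mono) auto
  finally have "p' \<in> closure \<Omega>"
    using s x closure_subset by (force simp: algebra_simps)
  moreover have "s * norm (p - x) \<le> 1 * \<epsilon>"
    using s px by (intro mult_mono) auto
  then have "dist z p' \<le> \<epsilon>"
    unfolding p'_def dist_norm using s by simp
  ultimately have up': "u p' \<le> u_sup z"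
    using u_le_u_sup_at[OF z] by simp
  have "dist p p' = norm ((x - z) + (1 - s) *\<^sub>R (p - x))"
    unfolding p'_def dist_norm by (simp add: algebra_simps)
  also have "\<dots> \<le> norm (z - x) + (1 - s) * norm (p - x)"
    using s by (simp add: norm_triangle_ineq[THEN order_trans] norm_minus_commute)
  also have "\<dots> \<le> h + (1 - s) * \<epsilon>"
    using px zx s by (intro add_mono mult_left_mono) auto
  finally have "dist p p' \<le> 2*h"
    using s by simp
  then have "\<bar>u p - u p'\<bar> \<le> L * (2*h) powr \<alpha>"
    using p \<open>p' \<in> closure \<Omega>\<close> by (intro holder_const_bound[OF u_holder L \<alpha>]) auto
  then show ?thesis
    using p up' by simp
qed

text \<open>The \<open>\<epsilon>\<close>-balls around the stencil points cover the double ball up to the angular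
  error \<open>\<theta>\<close>.\<close>
lemma stencil_u_sup_bound:
  assumes sub: "cball z (2*\<epsilon>) \<subseteq> \<Omega>" and S: "direction_set \<theta> S" and \<theta>: "\<theta> \<ge> 0"
    and p: "p \<in> cball z (2*\<epsilon>)"
  obtains x where "x \<in> stencil \<epsilon> S z" "u p \<le> u_sup x + L * (2*\<epsilon>*\<theta>) powr \<alpha>"
proof -
  have cl: "cball z (2*\<epsilon>) \<subseteq> closure \<Omega>"
    using sub closure_subset by blast
  then have "z \<in> closure \<Omega>" "p \<in> closure \<Omega>"
    using p \<epsilon> by auto
  show ?thesis
  proof (cases "dist z p \<le> \<epsilon>")
    case True
    then have "u p \<le> u_sup z"
      using \<open>z \<in> closure \<Omega>\<close> \<open>p \<in> closure \<Omega>\<close> by (intro u_le_u_sup_at) auto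
    then show ?thesis
      using that[of z] L unfolding stencil_def by (simp add: add_increasing2)
  next
    case False
    define \<rho> where "\<rho> = dist z p"
    have \<rho>: "\<epsilon> < \<rho>" "\<rho> \<le> 2*\<epsilon>"
      using False p unfolding \<rho>_def by auto
    have "p \<noteq> z"
      using \<rho> \<epsilon> unfolding \<rho>_def by auto
    then obtain w where w: "w \<in> S" "norm w = 1" "dist p (z + \<rho> *\<^sub>R w) \<le> \<rho> * \<theta>"
      unfolding \<rho>_def by (rule direction_set_approx[OF S])
    define x where "x = z + \<epsilon> *\<^sub>R w"
    have "dist z x = \<epsilon>" "dist x (z + \<rho> *\<^sub>R w) = \<rho> - \<epsilon>" "dist z (z + \<rho> *\<^sub>R w) = \<rho>"
      unfolding x_def dist_norm using w(2) \<rho> \<epsilon>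
      by (simp_all add: algebra_simps flip: scaleR_diff_left)
    then have "x \<in> closure \<Omega>" "z + \<rho> *\<^sub>R w \<in> closure \<Omega>"
      using cl \<rho> \<epsilon> by auto
    then have "u (z + \<rho> *\<^sub>R w) \<le> u_sup x"
      using \<open>dist x _ = \<rho> - \<epsilon>\<close> \<rho> by (intro u_le_u_sup_at) auto
    moreover have "\<bar>u p - u (z + \<rho> *\<^sub>R w)\<bar> \<le> L * (2*\<epsilon>*\<theta>) powr \<alpha>"
      using \<open>p \<in> closure \<Omega>\<close> \<open>z + \<rho> *\<^sub>R w \<in> closure \<Omega>\<close> w(3) \<rho> \<theta>
      by (intro holder_const_bound[OF u_holder L \<alpha>]) (auto intro: order_trans mult_right_mono)
    moreover have "x \<in> stencil \<epsilon> S z"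
      unfolding stencil_def x_def using w(1) by blast
    ultimately show ?thesis
      using that[of x] by simp
  qed
qed

text \<open>Consistency of the scheme for the sup-convolution: the ball maximum of \<open>u\<close> is read off a
  stencil point, and the maximiser for \<open>u_sup z\<close> lies in \<open>cball z \<epsilon>\<close>.\<close>
lemma u_sup_second_difference:
  assumes qs: "quad_subsolution \<Omega> u f" and sub: "cball z (2*\<epsilon>) \<subseteq> \<Omega>"
    and fk: "\<And>y. y \<in> ball z (2*\<epsilon>) \<Longrightarrow> f y < k"
    and S: "direction_set \<theta> S" and \<theta>: "\<theta> \<ge> 0"
  obtains x where "x \<in> stencil \<epsilon> S z"
    "2 * u_sup z - u_sup x - u z \<le> k * \<epsilon>\<^sup>2 + L * (2*\<epsilon>*\<theta>) powr \<alpha>"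
proof -
  have cont: "continuous_on (cball z (2*\<epsilon>)) u"
    using continuous_on_subset[OF u_cont] sub closure_subset by blast
  have "cball z (2*\<epsilon>) \<noteq> {}"
    using \<epsilon> by simp
  then obtain p where p: "p \<in> cball z (2*\<epsilon>)" "\<And>y. y \<in> cball z (2*\<epsilon>) \<Longrightarrow> u y \<le> u p"
    using continuous_attains_sup[OF compact_cball _ cont] by blast
  obtain x where x: "x \<in> stencil \<epsilon> S z" "u p \<le> u_sup x + L * (2*\<epsilon>*\<theta>) powr \<alpha>"
    using stencil_u_sup_bound[OF sub S \<theta> p(1)] .
  have "z \<in> closure \<Omega>"
    using sub \<epsilon> closure_subset by fastforce
  then obtain q where q: "q \<in> cball z \<epsilon> \<inter> closure \<Omega>" "u_sup z = u q"
    using u_sup_attained by blast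
  have "2 * u q - u p - u z \<le> k * \<epsilon>\<^sup>2"
    using q by (intro quad_subsolution_second_difference[OF qs sub \<epsilon> cont p fk]) auto
  then show ?thesis
    using that[OF x(1)] x(2) q(2) by simp
qed

end

section \<open>Discrete comparison\<close>

text \<open>The consistency error \<open>\<eta>\<close> collects the oscillation of \<open>f\<close> over a \<open>2\<epsilon>\<close>-ball, a slack
  \<open>\<epsilon>\<^sup>\<alpha>\<close> making the comparison strict, and the errors of the angular and of the spatial
  discretisation, the latter two relative to the \<open>\<epsilon>\<^sup>2\<close> scaling of the scheme.\<close>
definition consistency_error :: "real \<Rightarrow> real \<Rightarrow> real \<Rightarrow> real \<Rightarrow> real \<Rightarrow> real \<Rightarrow> real" where
  "consistency_error \<alpha> Lf L \<epsilon> \<theta> h =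
     Lf * (2*\<epsilon>) powr \<alpha> + \<epsilon> powr \<alpha> + (L * (2*\<epsilon>*\<theta>) powr \<alpha> + 2 * L * (2*h) powr \<alpha>) / \<epsilon>\<^sup>2"

lemma consistency_error_pos:
  assumes "Lf \<ge> 0" "L \<ge> 0" "\<epsilon> > 0"
  shows "consistency_error \<alpha> Lf L \<epsilon> \<theta> h > 0"
proof -
  have "0 \<le> Lf * (2*\<epsilon>) powr \<alpha>" "0 < \<epsilon> powr \<alpha>"
    "0 \<le> (L * (2*\<epsilon>*\<theta>) powr \<alpha> + 2 * L * (2*h) powr \<alpha>) / \<epsilon>\<^sup>2"
    using assms by simp_all
  then show ?thesis
    unfolding consistency_error_def by linarith
qed

lemma mult_le_abs_bound:
  fixes a b M :: real
  assumes "\<bar>b\<bar> \<le> M"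
  shows "a * b \<le> \<bar>a\<bar> * M"
proof -
  have "a * b \<le> \<bar>a\<bar> * \<bar>b\<bar>"
    by (metis abs_ge_self abs_mult)
  also have "\<dots> \<le> \<bar>a\<bar> * M"
    using assms by (intro mult_left_mono) auto
  finally show ?thesis .
qed

lemma scaling_factor_exists:
  fixes f :: "'a \<Rightarrow> real"
  assumes c: "c > 0" and \<eta>: "0 < \<eta>" "\<eta> < c/2"
    and sign: "(\<forall>y\<in>\<Omega>. f y \<ge> c) \<or> (\<forall>y\<in>\<Omega>. f y \<le> - c)"
  obtains \<kappa> where "\<kappa> > 0" "\<bar>\<kappa> - 1\<bar> \<le> 2*\<eta>/c" "\<And>y. y \<in> \<Omega> \<Longrightarrow> \<kappa> * (f y + \<eta>) < f y"
proof -
  define \<delta> where "\<delta> = 2*\<eta>/c"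
  have \<delta>: "0 < \<delta>" "\<delta> < 1" "\<delta> * c = 2*\<eta>"
    unfolding \<delta>_def using c \<eta> by (auto simp: field_simps)
  from sign show ?thesis
  proof
    assume pos: "\<forall>y\<in>\<Omega>. f y \<ge> c"
    have "(1 - \<delta>) * (f y + \<eta>) < f y" if "y \<in> \<Omega>" for y
    proof -
      have "\<delta> * c \<le> \<delta> * f y"
        using pos that \<delta> by (intro mult_left_mono) auto
      moreover have "0 < \<delta> * \<eta>"
        using \<delta> \<eta> by simp
      moreover have "(1 - \<delta>) * (f y + \<eta>) = f y + \<eta> - \<delta> * f y - \<delta> * \<eta>"
        by (simp add: algebra_simps)
      ultimately show ?thesis
        using \<delta> \<eta> by linarith
    qed
    then show ?thesis
      using that[of "1 - \<delta>"] \<delta> unfolding \<delta>_def by simp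
  next
    assume neg: "\<forall>y\<in>\<Omega>. f y \<le> - c"
    have "(1 + \<delta>) * (f y + \<eta>) < f y" if "y \<in> \<Omega>" for y
    proof -
      have "\<delta> * f y \<le> \<delta> * (- c)"
        using neg that \<delta> by (intro mult_left_mono) auto
      moreover have "\<delta> * \<eta> < 1 * \<eta>"
        using \<delta> \<eta> by (intro mult_strict_right_mono) auto
      moreover have "(1 + \<delta>) * (f y + \<eta>) = f y + \<eta> + \<delta> * f y + \<delta> * \<eta>"
        by (simp add: algebra_simps)
      ultimately show ?thesis
        using \<delta> by linarith
    qed
    then show ?thesis
      using that[of "1 + \<delta>"] \<delta> unfolding \<delta>_def by simp
  qed
qed

locale discrete_comparison = sup_convolution +
  fixes f U :: "'a \<Rightarrow> real" and \<T> :: "'a set set" and S :: "'a set" and \<theta> Lf :: real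
  assumes quad_sub: "quad_subsolution \<Omega> u f"
    and f_holder: "holder_const \<alpha> Lf \<Omega> f" and Lf: "Lf \<ge> 0"
    and mesh: "mesh \<T>" and inner_mesh: "inner_set \<Omega> (mesh_size \<T>) \<subseteq> mesh_domain \<T>"
    and mesh_in: "mesh_domain \<T> \<subseteq> \<Omega>" and h_le: "mesh_size \<T> \<le> \<epsilon>"
    and S: "direction_set \<theta> S" and \<theta>: "\<theta> \<ge> 0"
    and U: "U \<in> Vh \<T>"
    and scheme: "\<And>z. z \<in> interior_nodes \<Omega> \<T> \<epsilon> \<Longrightarrow>
      2 * U z - Max (U ` stencil \<epsilon> S z) - Min (U ` stencil \<epsilon> S z) = \<epsilon>\<^sup>2 * f z"
begin

lemma nodes_subset_closure: "nodes \<T> \<subseteq> closure \<Omega>"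
  using Union_mesh_subset_closure[OF mesh mesh_in] nodes_subset_Union by blast

lemma scaled_u_sup_lower_bound:
  assumes x: "x \<in> \<Union>\<T>" "cball x \<epsilon> \<subseteq> \<Omega>" and \<kappa>: "\<kappa> \<ge> 0"
    and m: "\<And>z. z \<in> nodes \<T> \<Longrightarrow> \<kappa> * u_sup z - U z \<le> m"
  shows "\<kappa> * u_sup x - \<kappa> * (L * (2 * mesh_size \<T>) powr \<alpha>) - m \<le> U x"
proof (rule Vh_ge_nodal_bound[OF mesh U x(1)])
  fix z
  assume z: "z \<in> nodes \<T>" "dist x z \<le> mesh_size \<T>"
  have "u_sup x \<le> u_sup z + L * (2 * mesh_size \<T>) powr \<alpha>"
    using z nodes_subset_closure h_le mesh_size_pos[OF mesh] by (intro u_sup_shift[OF x(2)]) auto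
  then have "\<kappa> * u_sup x \<le> \<kappa> * u_sup z + \<kappa> * (L * (2 * mesh_size \<T>) powr \<alpha>)"
    using \<kappa> by (metis distrib_left mult_left_mono)
  then show "\<kappa> * u_sup x - \<kappa> * (L * (2 * mesh_size \<T>) powr \<alpha>) - m \<le> U z"
    using m[OF z(1)] by simp
qed

lemma f_lt_on_double_ball:
  assumes "cball z (2*\<epsilon>) \<subseteq> \<Omega>" "y \<in> ball z (2*\<epsilon>)"
  shows "f y < f z + Lf * (2*\<epsilon>) powr \<alpha> + \<epsilon> powr \<alpha>"
proof -
  have "\<bar>f y - f z\<bar> \<le> Lf * (2*\<epsilon>) powr \<alpha>"
    using assms \<epsilon> by (intro holder_const_bound[OF f_holder Lf \<alpha>]) (auto simp: dist_commute)
  moreover have "\<epsilon> powr \<alpha> > 0"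
    using \<epsilon> by simp
  ultimately show ?thesis
    by linarith
qed

lemma max_at_interior_node:
  assumes z: "z \<in> interior_nodes \<Omega> \<T> \<epsilon>" and \<kappa>: "\<kappa> \<ge> 0"
    and max: "\<And>y. y \<in> nodes \<T> \<Longrightarrow> \<kappa> * u_sup y - U y \<le> \<kappa> * u_sup z - U z"
  shows "f z \<le> \<kappa> * (f z + consistency_error \<alpha> Lf L \<epsilon> \<theta> (mesh_size \<T>))"
proof -
  define Eh where "Eh = L * (2 * mesh_size \<T>) powr \<alpha>"
  define m where "m = \<kappa> * u_sup z - U z"
  define st where "st = stencil \<epsilon> S z"
  have sub: "cball z (2*\<epsilon>) \<subseteq> \<Omega>"
    by (rule interior_node_cball[OF z])
  have lb: "\<kappa> * u_sup x - \<kappa> * Eh - m \<le> U x" if "x \<in> st" for x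
    using scaled_u_sup_lower_bound[of x \<kappa> m] stencil_cball_subset[OF sub S \<epsilon>] that \<kappa> max
      interior_node_stencil[OF z \<epsilon> h_le inner_mesh S] unfolding Eh_def m_def st_def by blast
  define k where "k = f z + Lf * (2*\<epsilon>) powr \<alpha> + \<epsilon> powr \<alpha>"
  obtain x1 where x1: "x1 \<in> st"
    "2 * u_sup z - u_sup x1 - u z \<le> k * \<epsilon>\<^sup>2 + L * (2*\<epsilon>*\<theta>) powr \<alpha>"
    using u_sup_second_difference[OF quad_sub sub f_lt_on_double_ball[OF sub] S \<theta>]
    unfolding st_def k_def by blast
  have "finite st"
    unfolding st_def using S by (rule finite_stencil)
  then have "U x1 \<le> Max (U ` st)"
    using x1(1) by simp
  have "Min (U ` st) \<in> U ` st"
    using \<open>finite st\<close> unfolding st_def by (intro Min_in) (auto simp: stencil_def)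
  then obtain x2 where x2: "x2 \<in> st" "Min (U ` st) = U x2"
    by (metis imageE)
  have "cball x2 \<epsilon> \<subseteq> closure \<Omega>" "z \<in> cball x2 \<epsilon>"
    using stencil_cball_subset[OF sub S \<epsilon>, of x2] x2(1) closure_subset unfolding st_def
    by (auto simp: dist_commute)
  then have "u z \<le> u_sup x2"
    using \<epsilon> by (intro u_le_u_sup_at) auto
  have "\<epsilon>\<^sup>2 * f z = 2 * U z - Max (U ` st) - Min (U ` st)"
    using scheme[OF z] unfolding st_def by simp
  also have "\<dots> \<le> 2 * (\<kappa> * u_sup z - m) - (\<kappa> * u_sup x1 - \<kappa> * Eh - m)
      - (\<kappa> * u_sup x2 - \<kappa> * Eh - m)"
    using lb[OF x1(1)] lb[OF x2(1)] \<open>U x1 \<le> Max (U ` st)\<close> x2(2) m_def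
    by (simp add: algebra_simps)
  also have "\<dots> \<le> \<kappa> * (2 * u_sup z - u_sup x1 - u z) + 2 * \<kappa> * Eh"
    using mult_left_mono[OF \<open>u z \<le> u_sup x2\<close> \<kappa>] by (simp add: algebra_simps)
  also have "\<dots> \<le> \<kappa> * (k * \<epsilon>\<^sup>2 + L * (2*\<epsilon>*\<theta>) powr \<alpha> + 2 * Eh)"
    using mult_left_mono[OF x1(2) \<kappa>] by (simp add: algebra_simps)
  also have "\<dots> = \<epsilon>\<^sup>2 * (\<kappa> * (f z + consistency_error \<alpha> Lf L \<epsilon> \<theta> (mesh_size \<T>)))"
    unfolding k_def consistency_error_def Eh_def using \<epsilon> by (simp add: field_simps)
  finally show ?thesis
    using \<epsilon> by simp
qed

lemma nodal_error_bound:
  assumes \<kappa>: "\<kappa> > 0"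
    and strict: "\<And>y. y \<in> \<Omega> \<Longrightarrow> \<kappa> * (f y + consistency_error \<alpha> Lf L \<epsilon> \<theta> (mesh_size \<T>)) < f y"
    and bdry: "\<And>z. z \<in> boundary_nodes \<Omega> \<T> \<epsilon> \<Longrightarrow> u z - U z \<le> E"
    and z: "z \<in> nodes \<T>"
  shows "u z - U z \<le> 2 * \<bar>\<kappa> - 1\<bar> * M + \<kappa> * L * \<epsilon> powr \<alpha> + E"
proof -
  define W where "W y = \<kappa> * u_sup y - U y" for y
  have "Max (W ` nodes \<T>) \<in> W ` nodes \<T>"
    using finite_nodes[OF mesh] z by (intro Max_in) auto
  then obtain z0 where z0: "z0 \<in> nodes \<T>" "W z0 = Max (W ` nodes \<T>)"
    by (metis imageE)
  have max: "W y \<le> W z0" if "y \<in> nodes \<T>" for y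
    using finite_nodes[OF mesh] that z0(2) by simp
  \<comment> \<open>the comparison principle of the scheme: by strictness the maximum is not interior\<close>
  have "z0 \<in> boundary_nodes \<Omega> \<T> \<epsilon>"
  proof (rule ccontr)
    assume "z0 \<notin> boundary_nodes \<Omega> \<T> \<epsilon>"
    then have "z0 \<in> interior_nodes \<Omega> \<T> \<epsilon>"
      using z0(1) unfolding boundary_nodes_def by blast
    moreover from this have "z0 \<in> \<Omega>"
      unfolding interior_nodes_def inner_set_def by blast
    ultimately show False
      using max_at_interior_node[of z0 \<kappa>] max strict[of z0] \<kappa> unfolding W_def by fastforce
  qed
  have cl: "y \<in> closure \<Omega>" if "y \<in> nodes \<T>" for y
    using nodes_subset_closure that by blast
  have "W z0 \<le> (\<kappa> - 1) * u z0 + \<kappa> * L * \<epsilon> powr \<alpha> + (u z0 - U z0)"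
    using mult_left_mono[OF u_sup_le[OF cl[OF z0(1)]], of \<kappa>] \<kappa> unfolding W_def
    by (simp add: algebra_simps)
  also have "\<dots> \<le> \<bar>\<kappa> - 1\<bar> * M + \<kappa> * L * \<epsilon> powr \<alpha> + E"
    using mult_le_abs_bound[OF u_bounded[OF cl[OF z0(1)]], of "\<kappa> - 1"]
      bdry[OF \<open>z0 \<in> boundary_nodes \<Omega> \<T> \<epsilon>\<close>] by simp
  finally have "W z0 \<le> \<bar>\<kappa> - 1\<bar> * M + \<kappa> * L * \<epsilon> powr \<alpha> + E" .
  moreover have "u z - U z \<le> W z + (1 - \<kappa>) * u_sup z"
    using u_le_u_sup[OF cl[OF z]] unfolding W_def by (simp add: algebra_simps)
  moreover have "(1 - \<kappa>) * u_sup z \<le> \<bar>\<kappa> - 1\<bar> * M"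
    using mult_le_abs_bound[OF abs_u_sup_le[OF cl[OF z]], of "1 - \<kappa>"]
    by (simp add: abs_minus_commute)
  ultimately show ?thesis
    using max[OF z] by linarith
qed

lemma mesh_error_bound:
  assumes \<kappa>: "\<kappa> > 0"
    and strict: "\<And>y. y \<in> \<Omega> \<Longrightarrow> \<kappa> * (f y + consistency_error \<alpha> Lf L \<epsilon> \<theta> (mesh_size \<T>)) < f y"
    and bdry: "\<And>z. z \<in> boundary_nodes \<Omega> \<T> \<epsilon> \<Longrightarrow> u z - U z \<le> E"
    and x: "x \<in> mesh_domain \<T>"
  shows "u x - U x \<le> 2 * \<bar>\<kappa> - 1\<bar> * M + \<kappa> * L * \<epsilon> powr \<alpha> + E + L * mesh_size \<T> powr \<alpha>"
proof -
  have "x \<in> \<Union>\<T>"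
    using x interior_subset unfolding mesh_domain_def by blast
  have "x \<in> closure \<Omega>"
    using x mesh_in closure_subset by blast
  have "u x - (2 * \<bar>\<kappa> - 1\<bar> * M + \<kappa> * L * \<epsilon> powr \<alpha> + E + L * mesh_size \<T> powr \<alpha>) \<le> U x"
  proof (rule Vh_ge_nodal_bound[OF mesh U \<open>x \<in> \<Union>\<T>\<close>])
    fix z
    assume z: "z \<in> nodes \<T>" "dist x z \<le> mesh_size \<T>"
    then have "\<bar>u x - u z\<bar> \<le> L * mesh_size \<T> powr \<alpha>"
      using \<open>x \<in> closure \<Omega>\<close> nodes_subset_closure
      by (intro holder_const_bound[OF u_holder L \<alpha>]) auto
    then show "u x - (2 * \<bar>\<kappa> - 1\<bar> * M + \<kappa> * L * \<epsilon> powr \<alpha> + E + L * mesh_size \<T> powr \<alpha>)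
        \<le> U z"
      using nodal_error_bound[OF \<kappa> strict bdry z(1)] by simp
  qed
  then show ?thesis
    by simp
qed

text \<open>Since \<open>f\<close> has a sign, scaling the sup-convolution by \<open>\<kappa>\<close> close to \<open>1\<close> absorbs the consistency
  error, and the comparison principle of the scheme does the rest.\<close>
lemma one_sided_error_bound:
  defines "\<eta> \<equiv> consistency_error \<alpha> Lf L \<epsilon> \<theta> (mesh_size \<T>)"
  assumes c: "c > 0" and sign: "(\<forall>y\<in>\<Omega>. f y \<ge> c) \<or> (\<forall>y\<in>\<Omega>. f y \<le> - c)"
    and \<eta>: "\<eta> < c/2"
    and bdry: "\<And>z. z \<in> boundary_nodes \<Omega> \<T> \<epsilon> \<Longrightarrow> u z - U z \<le> E"
    and x: "x \<in> mesh_domain \<T>"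
  shows "u x - U x \<le> 4 * M * \<eta> / c + 2 * L * \<epsilon> powr \<alpha> + E + L * mesh_size \<T> powr \<alpha>"
proof -
  have "\<eta> > 0"
    unfolding \<eta>_def using Lf L \<epsilon> by (rule consistency_error_pos)
  then obtain \<kappa> where \<kappa>: "\<kappa> > 0" "\<bar>\<kappa> - 1\<bar> \<le> 2*\<eta>/c"
    and strict: "\<And>y. y \<in> \<Omega> \<Longrightarrow> \<kappa> * (f y + \<eta>) < f y"
    using scaling_factor_exists[OF c _ \<eta> sign] by blast
  have "2*\<eta>/c < 1"
    using \<eta> c by (simp add: field_simps)
  then have "\<kappa> \<le> 2"
    using \<kappa>(2) abs_ge_self[of "\<kappa> - 1"] by linarith
  have "M \<ge> 0"
    using u_bounded[of x] x mesh_in closure_subset unfolding mesh_domain_def by fastforce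
  have "u x - U x \<le> 2 * \<bar>\<kappa> - 1\<bar> * M + \<kappa> * L * \<epsilon> powr \<alpha> + E + L * mesh_size \<T> powr \<alpha>"
    using mesh_error_bound[OF \<kappa>(1) _ bdry x] strict unfolding \<eta>_def by blast
  moreover have "2 * \<bar>\<kappa> - 1\<bar> * M \<le> 4 * M * \<eta> / c"
    using mult_right_mono[OF \<kappa>(2) \<open>M \<ge> 0\<close>] c by (simp add: field_simps)
  moreover have "\<kappa> * L * \<epsilon> powr \<alpha> \<le> 2 * L * \<epsilon> powr \<alpha>"
    using \<open>\<kappa> \<le> 2\<close> L by (intro mult_right_mono) auto
  ultimately show ?thesis
    by linarith
qed

lemma discrete_comparison_uminus:
  assumes "quad_subsolution \<Omega> (\<lambda>x. - u x) (\<lambda>x. - f x)"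
  shows "discrete_comparison \<Omega> (\<lambda>x. - u x) \<alpha> L M \<epsilon> (\<lambda>x. - f x) (\<lambda>x. - U x) \<T> S \<theta> Lf"
proof unfold_locales
  fix z
  assume z: "z \<in> interior_nodes \<Omega> \<T> \<epsilon>"
  have st: "finite (U ` stencil \<epsilon> S z)" "U ` stencil \<epsilon> S z \<noteq> {}"
    using finite_stencil[OF S] by (auto simp: stencil_def)
  show "2 * - U z - Max ((\<lambda>x. - U x) ` stencil \<epsilon> S z) - Min ((\<lambda>x. - U x) ` stencil \<epsilon> S z)
      = \<epsilon>\<^sup>2 * - f z"
    using scheme[OF z] minus_Min_eq_Max[OF st] minus_Max_eq_Min[OF st] by (simp add: image_image)
qed (use u_cont u_holder L \<alpha> u_bounded \<epsilon> assms f_holder Lf mesh inner_mesh mesh_in h_le S \<theta> U in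
  \<open>auto intro: continuous_intros holder_const_uminus Vh_uminus\<close>)

end

section \<open>Error estimate and rate of convergence\<close>

lemma boundary_node_error:
  assumes "open \<Omega>" "frontier \<Omega> \<noteq> {}" and bc: "\<forall>x\<in>frontier \<Omega>. u x = g x"
    and u: "holder_const \<alpha> L (closure \<Omega>) u" "L \<ge> 0" and \<alpha>: "\<alpha> \<ge> 0"
    and g\<epsilon>: "holder_const \<alpha> Lg (closure \<Omega>) g\<epsilon>" "Lg \<ge> 0"
      "\<forall>x\<in>frontier \<Omega>. \<bar>g x - g\<epsilon> x\<bar> \<le> Cg * \<epsilon> powr \<alpha>"
    and z: "z \<in> closure \<Omega>" "z \<notin> inner_set \<Omega> (2*\<epsilon>)" and \<epsilon>: "\<epsilon> > 0"
  shows "\<bar>u z - g\<epsilon> z\<bar> \<le> L * (2*\<epsilon>) powr \<alpha> + Cg * \<epsilon> powr \<alpha> + Lg * (2*\<epsilon>) powr \<alpha>"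
proof -
  obtain y where y: "y \<in> frontier \<Omega>" "dist z y \<le> 2*\<epsilon>"
    using frontier_near_outside_inner_set[OF assms(1,2) z] \<epsilon> by auto
  then have "y \<in> closure \<Omega>"
    unfolding frontier_def by blast
  have "\<bar>u z - u y\<bar> \<le> L * (2*\<epsilon>) powr \<alpha>"
    using z(1) \<open>y \<in> closure \<Omega>\<close> y(2) by (intro holder_const_bound[OF u \<alpha>])
  moreover have "\<bar>g\<epsilon> y - g\<epsilon> z\<bar> \<le> Lg * (2*\<epsilon>) powr \<alpha>"
    using z(1) \<open>y \<in> closure \<Omega>\<close> y(2)
    by (intro holder_const_bound[OF g\<epsilon>(1,2) \<alpha>]) (auto simp: dist_commute)
  ultimately show ?thesis
    using bc g\<epsilon>(3) y(1) by fastforce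
qed

lemma error_estimate:
  assumes dom: "bounded_domain_cont_bdry \<Omega>" and visc: "viscosity_solution \<Omega> f g u"
    and u: "holder_const \<alpha> L (closure \<Omega>) u" "L \<ge> 0" "\<And>x. x \<in> closure \<Omega> \<Longrightarrow> \<bar>u x\<bar> \<le> M"
    and f: "holder_const \<alpha> Lf \<Omega> f" "Lf \<ge> 0"
    and sign: "c > 0" "(\<forall>y\<in>\<Omega>. f y \<ge> c) \<or> (\<forall>y\<in>\<Omega>. f y \<le> - c)"
    and g\<epsilon>: "holder_const \<alpha> Lg (closure \<Omega>) g\<epsilon>" "Lg \<ge> 0"
      "\<forall>x\<in>frontier \<Omega>. \<bar>g x - g\<epsilon> x\<bar> \<le> Cg * \<epsilon> powr \<alpha>"
    and \<alpha>: "\<alpha> \<ge> 0"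
    and mesh: "mesh \<T>" "inner_set \<Omega> (mesh_size \<T>) \<subseteq> mesh_domain \<T>" "mesh_domain \<T> \<subseteq> \<Omega>"
      "mesh_size \<T> \<le> \<epsilon>"
    and S: "direction_set \<theta> S" "\<theta> \<ge> 0"
    and uh: "discrete_solution \<Omega> \<T> \<epsilon> S f g\<epsilon> uh"
    and \<eta>: "consistency_error \<alpha> Lf L \<epsilon> \<theta> (mesh_size \<T>) < c/2"
    and x: "x \<in> mesh_domain \<T>"
  shows "\<bar>u x - uh x\<bar> \<le> 4 * M * consistency_error \<alpha> Lf L \<epsilon> \<theta> (mesh_size \<T>) / c
    + 2 * L * \<epsilon> powr \<alpha> + (L * (2*\<epsilon>) powr \<alpha> + Cg * \<epsilon> powr \<alpha> + Lg * (2*\<epsilon>) powr \<alpha>)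
    + L * mesh_size \<T> powr \<alpha>"
proof -
  have "\<epsilon> > 0"
    using mesh_size_pos[OF mesh(1)] mesh(4) by simp
  have "open \<Omega>"
    using dom unfolding bounded_domain_cont_bdry_def by blast
  interpret pos: discrete_comparison \<Omega> u \<alpha> L M \<epsilon> f uh \<T> S \<theta> Lf
    using visc u f \<alpha> mesh S uh \<open>\<epsilon> > 0\<close>
    by unfold_locales (auto simp: viscosity_solution_def discrete_solution_def
        intro: viscosity_solution_quad_subsolution discrete_solution_scheme)
  interpret neg: discrete_comparison \<Omega> "\<lambda>x. - u x" \<alpha> L M \<epsilon> "\<lambda>x. - f x" "\<lambda>x. - uh x" \<T> S \<theta> Lf
    by (rule pos.discrete_comparison_uminus[OF viscosity_solution_quad_subsolution_uminus[OF visc]])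
  have bdry: "\<bar>u z - uh z\<bar> \<le> L * (2*\<epsilon>) powr \<alpha> + Cg * \<epsilon> powr \<alpha> + Lg * (2*\<epsilon>) powr \<alpha>"
    if z: "z \<in> boundary_nodes \<Omega> \<T> \<epsilon>" for z
  proof -
    have "uh z = g\<epsilon> z"
      using z uh unfolding discrete_solution_def by blast
    moreover have "z \<in> closure \<Omega>" "z \<notin> inner_set \<Omega> (2*\<epsilon>)"
      using z pos.nodes_subset_closure unfolding boundary_nodes_def interior_nodes_def by auto
    moreover have "\<forall>x\<in>frontier \<Omega>. u x = g x"
      using visc unfolding viscosity_solution_def by blast
    ultimately show ?thesis
      using boundary_node_error[OF \<open>open \<Omega>\<close> frontier_nonempty_if_domain[OF dom] _ u(1,2) \<alpha> g\<epsilon>]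
        \<open>\<epsilon> > 0\<close> by simp
  qed
  have "(\<forall>y\<in>\<Omega>. - f y \<ge> c) \<or> (\<forall>y\<in>\<Omega>. - f y \<le> - c)"
    using sign(2) by auto
  then show ?thesis
    using pos.one_sided_error_bound[OF sign \<eta> _ x] neg.one_sided_error_bound[OF sign(1) _ \<eta> _ x]
      bdry by (fastforce simp: abs_le_iff)
qed

lemma powr_double_le:
  fixes x \<alpha> :: real
  assumes "0 \<le> x" "0 \<le> \<alpha>" "\<alpha> \<le> 1"
  shows "(2*x) powr \<alpha> \<le> 2 * x powr \<alpha>"
proof -
  have "(2::real) powr \<alpha> \<le> 2 powr 1"
    using assms by (intro powr_mono) auto
  then show ?thesis
    using assms by (simp add: powr_mult mult_right_mono)
qed

lemma parameter_rates:
  fixes \<alpha> h \<epsilon> c1 c2 :: real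
  defines "\<gamma> \<equiv> \<alpha>\<^sup>2/(2+\<alpha>)"
  assumes \<alpha>: "0 < \<alpha>" "\<alpha> \<le> 1" and h: "0 < h" "h \<le> 1" and c1: "0 < c1"
    and \<epsilon>: "c1 * h powr (\<alpha>/(2+\<alpha>)) \<le> \<epsilon>" "\<epsilon> \<le> c2 * h powr (\<alpha>/(2+\<alpha>))"
  shows "\<epsilon> powr \<alpha> \<le> c2 powr \<alpha> * h powr \<gamma>"
    and "\<And>X Y. 0 \<le> X \<Longrightarrow> X \<le> Y * h powr \<alpha> \<Longrightarrow> X / \<epsilon>\<^sup>2 \<le> Y / c1\<^sup>2 * h powr \<gamma>"
    and "h powr \<alpha> \<le> h powr \<gamma>"
proof -
  define H where "H = h powr (\<alpha>/(2+\<alpha>))"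
  have H: "H > 0"
    unfolding H_def using h by simp
  have "\<epsilon> > 0"
    using \<epsilon>(1) c1 H unfolding H_def by (smt (verit) mult_pos_pos)
  have "\<epsilon> powr \<alpha> \<le> (c2 * H) powr \<alpha>"
    using \<epsilon>(2) \<open>\<epsilon> > 0\<close> \<alpha> unfolding H_def by (intro powr_mono2) auto
  also have "\<dots> = c2 powr \<alpha> * h powr \<gamma>"
    using c1 \<epsilon> H \<open>\<epsilon> > 0\<close> h unfolding H_def \<gamma>_def
    by (simp add: powr_mult powr_powr power2_eq_square)
  finally show "\<epsilon> powr \<alpha> \<le> c2 powr \<alpha> * h powr \<gamma>" .
  have "H\<^sup>2 = h powr (2 * (\<alpha>/(2+\<alpha>)))"
    unfolding H_def using h by (simp add: power2_eq_square flip: powr_add)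
  moreover have "\<alpha> - 2 * (\<alpha>/(2+\<alpha>)) = \<gamma>"
    unfolding \<gamma>_def using \<alpha> by (simp add: field_simps power2_eq_square)
  ultimately have "h powr \<alpha> / H\<^sup>2 = h powr \<gamma>"
    using h by (simp flip: powr_diff)
  moreover have "(c1 * H)\<^sup>2 \<le> \<epsilon>\<^sup>2"
    using \<epsilon>(1) c1 H unfolding H_def by (intro power_mono) auto
  ultimately show "X / \<epsilon>\<^sup>2 \<le> Y / c1\<^sup>2 * h powr \<gamma>" if "0 \<le> X" "X \<le> Y * h powr \<alpha>" for X Y
  proof -
    have "X / \<epsilon>\<^sup>2 \<le> X / (c1 * H)\<^sup>2"
      using that \<open>(c1 * H)\<^sup>2 \<le> \<epsilon>\<^sup>2\<close> c1 H \<open>\<epsilon> > 0\<close> by (intro divide_left_mono) auto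
    also have "\<dots> \<le> (Y * h powr \<alpha>) / (c1 * H)\<^sup>2"
      using that by (intro divide_right_mono) auto
    also have "\<dots> = Y / c1\<^sup>2 * (h powr \<alpha> / H\<^sup>2)"
      by (simp add: power_mult_distrib)
    finally show ?thesis
      using \<open>h powr \<alpha> / H\<^sup>2 = h powr \<gamma>\<close> by simp
  qed
  show "h powr \<alpha> \<le> h powr \<gamma>"
    using h \<alpha> unfolding \<gamma>_def by (intro powr_mono') (auto simp: field_simps power2_eq_square)
qed

lemma consistency_error_rate:
  fixes \<alpha> h \<epsilon> \<theta> c1 c2 k2 Lf L :: real
  defines "\<gamma> \<equiv> \<alpha>\<^sup>2/(2+\<alpha>)"
  assumes \<alpha>: "0 < \<alpha>" "\<alpha> \<le> 1" and h: "0 < h" "h \<le> 1" and c1: "0 < c1"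
    and \<epsilon>: "c1 * h powr (\<alpha>/(2+\<alpha>)) \<le> \<epsilon>" "\<epsilon> \<le> c2 * h powr (\<alpha>/(2+\<alpha>))"
    and \<theta>: "0 \<le> \<theta>" "\<epsilon> * \<theta> \<le> k2 * h" and L: "Lf \<ge> 0" "L \<ge> 0"
  shows "consistency_error \<alpha> Lf L \<epsilon> \<theta> h
    \<le> (2 * Lf * c2 powr \<alpha> + c2 powr \<alpha> + L * (2*k2) powr \<alpha> / c1\<^sup>2 + 4 * L / c1\<^sup>2) * h powr \<gamma>"
proof -
  note rates = parameter_rates[OF \<alpha> h c1 \<epsilon>, folded \<gamma>_def]
  have "\<epsilon> > 0"
    using \<epsilon>(1) c1 h by (smt (verit) mult_pos_pos powr_gt_zero)
  have "(2*\<epsilon>) powr \<alpha> \<le> 2 * (c2 powr \<alpha> * h powr \<gamma>)"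
    using powr_double_le[of \<epsilon> \<alpha>] rates(1) \<open>\<epsilon> > 0\<close> \<alpha> by simp
  moreover have "(2*\<epsilon>*\<theta>) powr \<alpha> / \<epsilon>\<^sup>2 \<le> (2*k2) powr \<alpha> / c1\<^sup>2 * h powr \<gamma>"
  proof (rule rates(2))
    have "0 \<le> k2 * h"
      using \<theta> \<open>\<epsilon> > 0\<close> by (smt (verit) mult_nonneg_nonneg)
    then have "(2*\<epsilon>*\<theta>) powr \<alpha> \<le> (2*k2*h) powr \<alpha>"
      using \<theta> \<open>\<epsilon> > 0\<close> \<alpha> by (intro powr_mono2) auto
    also have "\<dots> = (2*k2) powr \<alpha> * h powr \<alpha>"
      using \<open>0 \<le> k2 * h\<close> h by (simp add: powr_mult zero_le_mult_iff)
    finally show "(2*\<epsilon>*\<theta>) powr \<alpha> \<le> (2*k2) powr \<alpha> * h powr \<alpha>" .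
  qed simp
  moreover have "(2*h) powr \<alpha> / \<epsilon>\<^sup>2 \<le> 2 / c1\<^sup>2 * h powr \<gamma>"
    using powr_double_le[of h \<alpha>] h \<alpha> by (intro rates(2)) auto
  ultimately have "Lf * (2*\<epsilon>) powr \<alpha> + \<epsilon> powr \<alpha> + L * ((2*\<epsilon>*\<theta>) powr \<alpha> / \<epsilon>\<^sup>2)
        + 2 * L * ((2*h) powr \<alpha> / \<epsilon>\<^sup>2)
      \<le> Lf * (2 * (c2 powr \<alpha> * h powr \<gamma>)) + c2 powr \<alpha> * h powr \<gamma>
        + L * ((2*k2) powr \<alpha> / c1\<^sup>2 * h powr \<gamma>) + 2 * L * (2 / c1\<^sup>2 * h powr \<gamma>)"
    using rates(1) L by (intro add_mono mult_left_mono) auto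
  then show ?thesis
    unfolding consistency_error_def by (simp add: algebra_simps add_divide_distrib)
qed

lemma error_bound_rate:
  fixes \<alpha> h \<epsilon> \<theta> c1 c2 :: real
  defines "\<gamma> \<equiv> \<alpha>\<^sup>2/(2+\<alpha>)"
  assumes \<alpha>: "0 < \<alpha>" "\<alpha> \<le> 1" and h: "0 < h" "h \<le> 1" and c1: "0 < c1"
    and \<epsilon>: "c1 * h powr (\<alpha>/(2+\<alpha>)) \<le> \<epsilon>" "\<epsilon> \<le> c2 * h powr (\<alpha>/(2+\<alpha>))"
    and \<eta>: "consistency_error \<alpha> Lf L \<epsilon> \<theta> h \<le> K * h powr \<gamma>"
    and nonneg: "0 \<le> M" "0 \<le> L" "0 \<le> Cg" "0 \<le> Lg" "c > 0"
  shows "4 * M * consistency_error \<alpha> Lf L \<epsilon> \<theta> h / c + 2 * L * \<epsilon> powr \<alpha>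
      + (L * (2*\<epsilon>) powr \<alpha> + Cg * \<epsilon> powr \<alpha> + Lg * (2*\<epsilon>) powr \<alpha>) + L * h powr \<alpha>
    \<le> (4 * M * K / c + 4 * L * c2 powr \<alpha> + (Cg + 2 * Lg) * c2 powr \<alpha> + L) * h powr \<gamma>"
proof -
  define A where "A = c2 powr \<alpha> * h powr \<gamma>"
  note rates = parameter_rates[OF \<alpha> h c1 \<epsilon>, folded \<gamma>_def]
  have "\<epsilon> > 0"
    using \<epsilon>(1) c1 h by (smt (verit) mult_pos_pos powr_gt_zero)
  have "\<epsilon> powr \<alpha> \<le> A" "(2*\<epsilon>) powr \<alpha> \<le> 2 * A"
    unfolding A_def using rates(1) powr_double_le[of \<epsilon> \<alpha>] \<open>\<epsilon> > 0\<close> \<alpha> by simp_all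
  have "4 * M * consistency_error \<alpha> Lf L \<epsilon> \<theta> h / c \<le> 4 * M * (K * h powr \<gamma>) / c"
    using \<eta> nonneg by (intro divide_right_mono mult_left_mono) auto
  moreover have "2 * L * \<epsilon> powr \<alpha> + L * (2*\<epsilon>) powr \<alpha> \<le> 2 * L * A + L * (2 * A)"
    using \<open>\<epsilon> powr \<alpha> \<le> A\<close> \<open>(2*\<epsilon>) powr \<alpha> \<le> 2 * A\<close> nonneg by (intro add_mono mult_left_mono) auto
  moreover have "Cg * \<epsilon> powr \<alpha> + Lg * (2*\<epsilon>) powr \<alpha> \<le> Cg * A + Lg * (2 * A)"
    using \<open>\<epsilon> powr \<alpha> \<le> A\<close> \<open>(2*\<epsilon>) powr \<alpha> \<le> 2 * A\<close> nonneg by (intro add_mono mult_left_mono) auto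
  moreover have "L * h powr \<alpha> \<le> L * h powr \<gamma>"
    using rates(3) nonneg by (intro mult_left_mono) auto
  ultimately show ?thesis
    unfolding A_def by (simp add: algebra_simps add_divide_distrib)
qed

lemma boundary_extension_nonneg_consts:
  assumes BC2: "\<forall>\<beta>\<in>{0..1}. holder_on \<beta> (frontier \<Omega>) g \<longrightarrow>
      (\<exists>L C. \<forall>\<epsilon>>0. holder_on \<beta> (closure \<Omega>) (gt \<epsilon>) \<and> holder_const \<beta> L (closure \<Omega>) (gt \<epsilon>)
        \<and> (\<forall>x\<in>frontier \<Omega>. \<bar>g x - gt \<epsilon> x\<bar> \<le> C * \<epsilon> powr \<beta>))"
    and "holder_on \<alpha> (frontier \<Omega>) g" "\<alpha> \<in> {0..1}"
  obtains L C where "\<And>\<epsilon>. \<epsilon> > 0 \<Longrightarrow> holder_const \<alpha> L (closure \<Omega>) (gt \<epsilon>)"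
    "\<And>\<epsilon>. \<epsilon> > 0 \<Longrightarrow> \<forall>x\<in>frontier \<Omega>. \<bar>g x - gt \<epsilon> x\<bar> \<le> C * \<epsilon> powr \<alpha>" "L \<ge> 0" "C \<ge> 0"
proof -
  obtain L C where LC: "\<forall>\<epsilon>>0. holder_on \<alpha> (closure \<Omega>) (gt \<epsilon>) \<and> holder_const \<alpha> L (closure \<Omega>) (gt \<epsilon>)
      \<and> (\<forall>x\<in>frontier \<Omega>. \<bar>g x - gt \<epsilon> x\<bar> \<le> C * \<epsilon> powr \<alpha>)"
    using BC2 assms(2,3) by blast
  have "\<bar>g x - gt \<epsilon> x\<bar> \<le> \<bar>C\<bar> * \<epsilon> powr \<alpha>" if "\<epsilon> > 0" "x \<in> frontier \<Omega>" for \<epsilon> x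
  proof -
    have "\<bar>g x - gt \<epsilon> x\<bar> \<le> C * \<epsilon> powr \<alpha>"
      using LC that by blast
    also have "\<dots> \<le> \<bar>C\<bar> * \<epsilon> powr \<alpha>"
      by (intro mult_right_mono) auto
    finally show ?thesis .
  qed
  moreover have "holder_const \<alpha> \<bar>L\<bar> (closure \<Omega>) (gt \<epsilon>)" if "\<epsilon> > 0" for \<epsilon>
    using LC that holder_const_abs by blast
  ultimately show ?thesis
    using that[of "\<bar>L\<bar>" "\<bar>C\<bar>"] by simp
qed

lemma convergence_rate:
  fixes \<Omega> :: "'a::euclidean_space set" and f g u :: "'a \<Rightarrow> real" and gt :: "real \<Rightarrow> 'a \<Rightarrow> real"
  assumes dom: "bounded_domain_cont_bdry \<Omega>" and visc: "viscosity_solution \<Omega> f g u"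
    and u: "holder_const \<alpha> L (closure \<Omega>) u" "L \<ge> 0" "\<And>x. x \<in> closure \<Omega> \<Longrightarrow> \<bar>u x\<bar> \<le> M" "M \<ge> 0"
    and f: "holder_const \<alpha> Lf \<Omega> f" "Lf \<ge> 0"
    and sign: "c > 0" "(\<forall>y\<in>\<Omega>. f y \<ge> c) \<or> (\<forall>y\<in>\<Omega>. f y \<le> - c)"
    and gt: "\<And>\<epsilon>. \<epsilon> > 0 \<Longrightarrow> holder_const \<alpha> Lg (closure \<Omega>) (gt \<epsilon>)"
      "\<And>\<epsilon>. \<epsilon> > 0 \<Longrightarrow> \<forall>x\<in>frontier \<Omega>. \<bar>g x - gt \<epsilon> x\<bar> \<le> Cg * \<epsilon> powr \<alpha>" "Lg \<ge> 0" "Cg \<ge> 0"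
    and \<alpha>: "0 < \<alpha>" "\<alpha> \<le> 1" and c1: "0 < c1"
  shows "\<exists>C h0. C > 0 \<and> h0 > 0 \<and> (\<forall>\<T> \<epsilon> \<theta> S uh x. mesh \<T> \<and> mesh_size \<T> < h0 \<and>
       inner_set \<Omega> (mesh_size \<T>) \<subseteq> mesh_domain \<T> \<and> mesh_domain \<T> \<subseteq> \<Omega> \<and> mesh_size \<T> \<le> \<epsilon> \<and> 0 < \<theta> \<and>
       c1 * mesh_size \<T> powr (\<alpha>/(2+\<alpha>)) \<le> \<epsilon> \<and> \<epsilon> \<le> c2 * mesh_size \<T> powr (\<alpha>/(2+\<alpha>)) \<and>
       \<epsilon> * \<theta> \<le> k2 * mesh_size \<T> \<and> direction_set \<theta> S \<and>
       discrete_solution \<Omega> \<T> \<epsilon> S f (gt \<epsilon>) uh \<and> x \<in> mesh_domain \<T> \<longrightarrow>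
       \<bar>u x - uh x\<bar> \<le> C * mesh_size \<T> powr (\<alpha>\<^sup>2/(2+\<alpha>)))"
proof -
  define \<gamma> where "\<gamma> = \<alpha>\<^sup>2/(2+\<alpha>)"
  define K where "K = 2 * Lf * c2 powr \<alpha> + c2 powr \<alpha> + L * (2*k2) powr \<alpha> / c1\<^sup>2 + 4 * L / c1\<^sup>2"
  define C where "C = 4 * M * K / c + 4 * L * c2 powr \<alpha> + (Cg + 2 * Lg) * c2 powr \<alpha> + L + 1"
  \<comment> \<open>below \<open>h0\<close> the consistency error stays under \<open>c/2\<close>\<close>
  define q where "q = c / (2 * (K + 1))"
  define h0 where "h0 = min 1 (q powr (1/\<gamma>))"
  have "K \<ge> 0" "\<gamma> > 0"
    unfolding K_def \<gamma>_def using u(2) f(2) \<alpha> by simp_all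
  then have "C > 0" "q > 0" "h0 > 0"
    unfolding C_def q_def h0_def using u(2,4) gt(3,4) sign(1) by (simp_all add: add_nonneg_pos)
  have "\<bar>u x - uh x\<bar> \<le> C * mesh_size \<T> powr \<gamma>"
    if mesh: "mesh \<T>" "mesh_size \<T> < h0" "inner_set \<Omega> (mesh_size \<T>) \<subseteq> mesh_domain \<T>"
      "mesh_domain \<T> \<subseteq> \<Omega>" "mesh_size \<T> \<le> \<epsilon>"
      and \<theta>: "0 < \<theta>"
      and \<epsilon>: "c1 * mesh_size \<T> powr (\<alpha>/(2+\<alpha>)) \<le> \<epsilon>" "\<epsilon> \<le> c2 * mesh_size \<T> powr (\<alpha>/(2+\<alpha>))"
      and \<epsilon>\<theta>: "\<epsilon> * \<theta> \<le> k2 * mesh_size \<T>" and S: "direction_set \<theta> S"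
      and uh: "discrete_solution \<Omega> \<T> \<epsilon> S f (gt \<epsilon>) uh" and x: "x \<in> mesh_domain \<T>"
    for \<T> \<epsilon> \<theta> S uh x
  proof -
    define h where "h = mesh_size \<T>"
    have h: "0 < h" "h \<le> 1"
      using mesh_size_pos[OF mesh(1)] mesh(2) unfolding h_def h0_def by auto
    have \<eta>: "consistency_error \<alpha> Lf L \<epsilon> \<theta> h \<le> K * h powr \<gamma>"
      unfolding K_def \<gamma>_def using \<epsilon> \<epsilon>\<theta> \<theta> f(2) u(2)
      by (intro consistency_error_rate[OF \<alpha> h c1]) (simp_all add: h_def)
    have "h powr \<gamma> < (q powr (1/\<gamma>)) powr \<gamma>"
      using mesh(2) h \<open>\<gamma> > 0\<close> unfolding h_def h0_def by (intro powr_less_mono2) auto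
    then have "(K + 1) * h powr \<gamma> < c/2"
      using \<open>\<gamma> > 0\<close> \<open>q > 0\<close> \<open>K \<ge> 0\<close> unfolding q_def by (simp add: powr_powr field_simps)
    then have "consistency_error \<alpha> Lf L \<epsilon> \<theta> h < c/2"
      using \<eta> powr_ge_zero[of h \<gamma>] distrib_right[of K 1 "h powr \<gamma>"] by linarith
    then have "\<bar>u x - uh x\<bar> \<le> 4 * M * consistency_error \<alpha> Lf L \<epsilon> \<theta> h / c + 2 * L * \<epsilon> powr \<alpha>
        + (L * (2*\<epsilon>) powr \<alpha> + Cg * \<epsilon> powr \<alpha> + Lg * (2*\<epsilon>) powr \<alpha>) + L * h powr \<alpha>"
      using \<alpha> \<theta> h(1) mesh(5) unfolding h_def
      by (intro error_estimate[OF dom visc u(1-3) f sign gt(1) gt(3) gt(2) _ mesh(1,3,4,5) S _ uh _ x])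
        auto
    also have "\<dots> \<le> (C - 1) * h powr \<gamma>"
      unfolding C_def \<gamma>_def using \<epsilon> \<eta> u(2,4) gt(3,4) sign(1)
      by (simp only: add_diff_cancel_right')
        (intro error_bound_rate[OF \<alpha> h c1], simp_all add: h_def \<gamma>_def)
    also have "\<dots> \<le> C * h powr \<gamma>"
      by (simp add: algebra_simps)
    finally show ?thesis
      unfolding h_def .
  qed
  then show ?thesis
    using \<open>C > 0\<close> \<open>h0 > 0\<close> unfolding \<gamma>_def by blast
qed

theorem corollary4p2:
  fixes \<Omega> :: "'a::euclidean_space set"
    and f g u :: "'a \<Rightarrow> real"
    and gt :: "real \<Rightarrow> 'a \<Rightarrow> real"
    and \<alpha> \<sigma> c\<^sub>1 c\<^sub>2 k\<^sub>1 k\<^sub>2 :: real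
  assumes dom: "bounded_domain_cont_bdry \<Omega>"
    and RHS1: "continuous_on \<Omega> f" "bounded (f ` \<Omega>)"
    and RHS2a: "(\<exists>c>0. \<forall>x\<in>\<Omega>. f x \<le> - c) \<or> (\<exists>c>0. \<forall>x\<in>\<Omega>. f x \<ge> c)"
    and BC1: "continuous_on (frontier \<Omega>) g"
    and BC2: "\<forall>\<epsilon>>0. continuous_on (closure \<Omega>) (gt \<epsilon>)"
      "\<forall>\<beta>\<in>{0..1}. holder_on \<beta> (frontier \<Omega>) g \<longrightarrow>
         (\<exists>L C. \<forall>\<epsilon>>0. holder_on \<beta> (closure \<Omega>) (gt \<epsilon>) \<and> holder_const \<beta> L (closure \<Omega>) (gt \<epsilon>)
                 \<and> (\<forall>x\<in>frontier \<Omega>. \<bar>g x - gt \<epsilon> x\<bar> \<le> C * \<epsilon> powr \<beta>))"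
    and alpha: "0 < \<alpha>" "\<alpha> \<le> 1"
    and f_hol: "holder_on \<alpha> \<Omega> f"
    and g_hol: "holder_on \<alpha> (frontier \<Omega>) g"
    and visc: "viscosity_solution \<Omega> f g u"
    and u_hol: "holder_on \<alpha> (closure \<Omega>) u"
    and sigma: "\<sigma> \<ge> 1"
    and params: "0 < c\<^sub>1" "c\<^sub>1 \<le> c\<^sub>2" "0 < k\<^sub>1" "k\<^sub>1 \<le> k\<^sub>2"
  shows "\<exists>C h\<^sub>0. C > 0 \<and> h\<^sub>0 > 0 \<and>
    (\<forall>(\<T> :: 'a set set) \<epsilon> \<theta> S uh.
       mesh \<T> \<and> quasiuniform \<sigma> \<T> \<and> mesh_size \<T> < h\<^sub>0 \<and>
       inner_set \<Omega> (mesh_size \<T>) \<subseteq> mesh_domain \<T> \<and> mesh_domain \<T> \<subseteq> \<Omega> \<and>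
       mesh_size \<T> \<le> \<epsilon> \<and> \<epsilon> \<le> diameter \<Omega> \<and> 0 < \<theta> \<and> \<theta> \<le> 1 \<and>
       c\<^sub>1 * mesh_size \<T> powr (\<alpha> / (2 + \<alpha>)) \<le> \<epsilon> \<and>
       \<epsilon> \<le> c\<^sub>2 * mesh_size \<T> powr (\<alpha> / (2 + \<alpha>)) \<and>
       k\<^sub>1 * mesh_size \<T> \<le> \<epsilon> * \<theta> \<and> \<epsilon> * \<theta> \<le> k\<^sub>2 * mesh_size \<T> \<and>
       direction_set \<theta> S \<and>
       discrete_solution \<Omega> \<T> \<epsilon> S f (gt \<epsilon>) uh
       \<longrightarrow> (\<forall>x\<in>mesh_domain \<T>. \<bar>u x - uh x\<bar> \<le> C * mesh_size \<T> powr (\<alpha>\<^sup>2 / (2 + \<alpha>))))"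
proof -
  obtain L where L: "L \<ge> 0" "holder_const \<alpha> L (closure \<Omega>) u"
    using u_hol by (rule holder_on_nonneg_const)
  obtain M where M: "M \<ge> 0" "\<And>x. x \<in> closure \<Omega> \<Longrightarrow> \<bar>u x\<bar> \<le> M"
    using holder_on_abs_bound[OF u_hol] by blast
  obtain Lf where Lf: "Lf \<ge> 0" "holder_const \<alpha> Lf \<Omega> f"
    using f_hol by (rule holder_on_nonneg_const)
  have "\<alpha> \<in> {0..1}"
    using alpha by simp
  then obtain Lg Cg where gt: "\<And>\<epsilon>. \<epsilon> > 0 \<Longrightarrow> holder_const \<alpha> Lg (closure \<Omega>) (gt \<epsilon>)"
    "\<And>\<epsilon>. \<epsilon> > 0 \<Longrightarrow> \<forall>x\<in>frontier \<Omega>. \<bar>g x - gt \<epsilon> x\<bar> \<le> Cg * \<epsilon> powr \<alpha>" "Lg \<ge> 0" "Cg \<ge> 0"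
    using boundary_extension_nonneg_consts[OF BC2(2) g_hol] by blast
  obtain c where c: "c > 0" "(\<forall>y\<in>\<Omega>. f y \<ge> c) \<or> (\<forall>y\<in>\<Omega>. f y \<le> - c)"
    using RHS2a by blast
  show ?thesis
    using convergence_rate[where ?c2.0 = c\<^sub>2 and ?k2.0 = k\<^sub>2,
        OF dom visc L(2,1) M(2,1) Lf(2,1) c gt alpha params(1)]
    by blast
qed

end
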